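(* Let $p$ be an odd prime, $k\ge2$ and $s=k+2$. Put $S=\sum_{j=0}^{k-1}p^j$ and $C=2(k+1)p^{k+1}-1$. For $0\le l<p^k$, the $p^k$-Fibonacci number of $V_{s,l}$ is as follows. (a) If $l=0$: $\mathcal M_{V_{s,l}}=\frac{p-1}{2}\,C$. (b) If $0\le i\le k-2$, $1\le t\le p-1$ and $(t-1)\sum_{\iota=i}^{k-1}p^\iota+p^i\le l\le (t-1)\sum_{\iota=i+1}^{k-1}p^\iota+p^{i+1}-1$: $\mathcal M_{V_{s,l}}=\frac{p-1}{2}\big(C+2tS-2\sum_{\mu=0}^{k-i-2}p^\mu\big)$ if $1\le t\le\frac{p-1}{2}$, and $\mathcal M_{V_{s,l}}=\frac{p-1}{2}\big(C+(2t-2p)S-2\sum_{\mu=0}^{k-i-2}p^\mu\big)$ if $\frac{p+1}{2}\le t\le p-1$. (c) If $1\le t\le p-1$, $t\neq\frac{p-1}{2}$, and $tp^{k-1}\le l\le tS$: $\mathcal M_{V_{s,l}}=\frac{p-1}{2}(C+2tS)$ if $1\le t\le\frac{p-3}{2}$, and $\mathcal M_{V_{s,l}}=\frac{p-1}{2}(C+(2t-2p)S)$ if $\frac{p+1}{2}\le t\le p-1$. (d) If $1\le i'\le k-1$ and $\frac{p-1}{2}\sum_{\iota=i'}^{k-1}p^\iota\le l\le\frac{p-1}{2}\sum_{\iota=i'-1}^{k-1}p^\iota-1$: $\mathcal M_{V_{s,l}}=\frac{p-1}{2}\Big(C-p^k-2\sum_{\theta=1}^{k-1}p^\theta+2\sum_{\mu=k-i'+1}^{k}p^\mu-1\Big)$.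 (e) If $l=\frac{p-1}{2}S$: $\mathcal M_{V_{s,l}}=\frac{p-1}{2}\Big(C-p^k-2\sum_{\theta=1}^{k-1}p^\theta-1\Big)$.
   Context: Fix an odd prime $p$ and an integer $k\ge 0$. For integers $0\le i<n$ write $\lambda(n,i)=(n-i,1^i)$ for the hook partition of $n$ with $n-i$ boxes in its first row and $i$ further boxes in its first column. If $\mu=\lambda(n',i')$ is obtained from $\lambda(n,i)$ by appending $m=(n'-i')-(n-i)\ge 0$ boxes to the first row and $n''=i'-i\ge 0$ boxes to the first column, we say $\mu$ is obtained by adding the block $B_{m,n''}$ ($m$ horizontal nodes, $n''$ vertical nodes). Put $x_s=p^k(sp-(s+1))$. The relevant part ("column $k$") of the $p$-Bratteli diagram is the graded directed graph with vertices: on floor $2k+1$, $S_i=\lambda(p^k(p-1),i)$ for $0\le i<p^k(p-1)$; on floor $2(k+s)$ ($s\ge1$), $V_{s,l}=\lambda\big(p^k(2sp-(2s+1)),\,x_s+l\big)$ for $0\le l<p^k$; on floor $2(k+s)-1$ ($s\ge2$), $W_{s,l'}=\lambda\big(p^k((2s-1)p-2s),\,x_{s-1}+l'\big)$ for $0\le l'<p^{k+1}$; and edges, each labelled by the block added: (E1) $S_i\to V_{1,l}$ exactly when $i=p^kt+l$ with $0\le t\le p-2$, block $B_{p^kt,\,p^k(p-2-t)}$; (E2) for $s\ge2$, $0\le l<p^k$, $0\le\beta\le p-1$: $V_{s-1,l}\to W_{s,pl+\beta}$, block $B_{p^k(p-1)-((p-1)l+\beta),\,(p-1)l+\beta}$;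 (E3) for $s\ge 2$, $0\le l'<p^{k+1}$ and $t=\lfloor l'/p^k\rfloor$: $W_{s,l'}\to V_{s,l'-p^kt}$, block $B_{p^kt,\,p^k(p-1-t)}$. A path ending at a vertex $v$ is a sequence of edges starting at some $S_i$ and going up one floor at a time to $v$ ($S_i\to V_{1,\cdot}\to W_{2,\cdot}\to V_{2,\cdot}\to W_{3,\cdot}\to\cdots\to v$); $\mathcal P(v)$ is the set of all paths ending at $v$. The blocks of a path are numbered $B^2,B^3,\dots,B^N$: $B^2$ is the block of the edge leaving $S_i$, and for $j\ge2$, $B^{2j-1}$ is the block of the edge into $W_{j,\cdot}$ and $B^{2j}$ the block of the edge into $V_{j,\cdot}$. Write $B^j=B_{m_j,n_j}$. Descents: $1\in\mathrm{Des}(P)$ iff $m_2=p^kt$ with $0\le t<\frac{p-1}{2}$; $2\notin\mathrm{Des}(P)$; for $3\le j<N$, $j\in\mathrm{Des}(P)$ iff $m_j>m_{j+1}$ and $n_j<n_{j+1}$. $\mathrm{des}(P)=|\mathrm{Des}(P)|$. The $p^k$-Fibonacci number of a vertex $v$ is $\mathcal M_v=\sum_{P\in\mathcal P(v)}\mathrm{des}(P)$. *)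

theory Defs
  imports "HOL-Computational_Algebra.Primes"
begin

text \<open>Vertices of column k of the p-Bratteli diagram, by their labels:
  Sv i = S_i (floor 2k+1), Vv s l = V_{s,l} (floor 2(k+s)), Wv s l' = W_{s,l'} (floor 2(k+s)-1).\<close>
datatype bvtx = Sv nat | Vv nat nat | Wv nat nat

fun bedge :: "nat \<Rightarrow> nat \<Rightarrow> bvtx \<Rightarrow> bvtx \<Rightarrow> bool" where
  "bedge p k (Sv i) (Vv s l) =
     (s = 1 \<and> i < p^k * (p - 1) \<and> l < p^k \<and> (\<exists>t. t \<le> p - 2 \<and> i = p^k * t + l))"
| "bedge p k (Vv s0 l) (Wv s l') =
     (2 \<le> s \<and> s0 = s - 1 \<and> l < p^k \<and> l' < p^(k+1) \<and> (\<exists>\<beta>. \<beta> \<le> p - 1 \<and> l' = p * l + \<beta>))"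
| "bedge p k (Wv s l') (Vv s2 l) =
     (2 \<le> s \<and> s2 = s \<and> l' < p^(k+1) \<and> l < p^k \<and> l = l' - p^k * (l' div p^k))"
| "bedge p k _ _ = False"

text \<open>Block labelling an edge, as a pair (m, n) = (horizontal nodes, vertical nodes).\<close>
fun bblock :: "nat \<Rightarrow> nat \<Rightarrow> bvtx \<Rightarrow> bvtx \<Rightarrow> nat \<times> nat" where
  "bblock p k (Sv i) (Vv s l) = (let t = i div p^k in (p^k * t, p^k * (p - 2 - t)))"
| "bblock p k (Vv s0 l) (Wv s l') =
     (let \<beta> = l' - p * l in (p^k * (p - 1) - ((p - 1) * l + \<beta>), (p - 1) * l + \<beta>))"
| "bblock p k (Wv s l') (Vv s2 l) = (let t = l' div p^k in (p^k * t, p^k * (p - 1 - t)))"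
| "bblock p k _ _ = (0, 0)"

definition bpaths :: "nat \<Rightarrow> nat \<Rightarrow> bvtx \<Rightarrow> bvtx list set" where
  "bpaths p k v = {vs. vs \<noteq> [] \<and> (\<exists>i. hd vs = Sv i \<and> i < p^k * (p - 1)) \<and> last vs = v \<and>
      (\<forall>j. Suc j < length vs \<longrightarrow> bedge p k (vs ! j) (vs ! Suc j))}"

text \<open>Block B^j = B_{m_j,n_j} of a path (2 \<le> j \<le> N = length of the vertex list).\<close>
definition Bm :: "nat \<Rightarrow> nat \<Rightarrow> bvtx list \<Rightarrow> nat \<Rightarrow> nat" where
  "Bm p k vs j = fst (bblock p k (vs ! (j - 2)) (vs ! (j - 1)))"

definition Bn :: "nat \<Rightarrow> nat \<Rightarrow> bvtx list \<Rightarrow> nat \<Rightarrow> nat" where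
  "Bn p k vs j = snd (bblock p k (vs ! (j - 2)) (vs ! (j - 1)))"

definition Des :: "nat \<Rightarrow> nat \<Rightarrow> bvtx list \<Rightarrow> nat set" where
  "Des p k vs = {j. (j = 1 \<and> 2 \<le> length vs \<and> (\<exists>t. Bm p k vs 2 = p^k * t \<and> 2 * t < p - 1))
      \<or> (3 \<le> j \<and> j < length vs \<and> Bm p k vs j > Bm p k vs (j + 1) \<and> Bn p k vs j < Bn p k vs (j + 1))}"

definition des :: "nat \<Rightarrow> nat \<Rightarrow> bvtx list \<Rightarrow> nat" where
  "des p k vs = card (Des p k vs)"

definition fibM :: "nat \<Rightarrow> nat \<Rightarrow> bvtx \<Rightarrow> nat" where
  "fibM p k v = (\<Sum>P\<in>bpaths p k v. des p k P)"

end

(*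
  A path ending at V_{s,l} is determined by its start S_{p^k t + l'} (t < p - 1) and by one digit
  a < p per W-vertex: V_{j,m} is entered from W_{j, a p^k + m}, which is entered from
  V_{j-1, (a p^k + m) div p}.  Writing these digits above the base-p digits of l gives a number
  D = U p^k + l with U < p^(s-1), and the W-vertex j floors below the top is W_{s-j, w_j} with the
  window w_j = D div p^j mod p^(k+1).

  Position 1 is a descent for h = (p-1)/2 of the
  p - 1 values of t, position 2 never is.  With R_n = 1 + p + ... + p^(n-1), the vertex W_{j,w}
  is a descent iff w < h R_(k+1), and a vertex V entered from W_{j, a p^k + m} and left towards
  W_{j+1,w} is one iff (p - 1 - a) R_(k+1) < w: in both cases the block comparison is a monotone
  step function of w crossing its level at that point.  Hence M_(V_(s,l)) is h p^(s-1) plus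
  p - 1 times the total number of descents coded by the numbers D.

  For s = k + 2 the windows run through all residues, so the sum over U is a count in
  lexicographic order; it gives M = h (C - 2 p S + 2 X + 2 Y), where X and Y (half_weight and
  rank_weight) depend on l only through the truncations l div p^j.  On each of the ranges (a)-(e)
  these truncations lie between consecutive multiples of repunits, which evaluates X and Y.
*)

theory Submission
  imports Defs
begin

lemma digit_add_less:
  fixes a l n P :: nat
  assumes "a < n" "l < P"
  shows "a * P + l < n * P"
proof -
  have "a * P + l < (a + 1) * P" using assms by simp
  also have "\<dots> \<le> n * P" using assms by (intro mult_right_mono) auto
  finally show ?thesis .
qed

lemma mono_less_iff_le:
  fixes g :: "nat \<Rightarrow> 'a::linorder"
  assumes "mono g" "g n < c" "c \<le> g (Suc n)"
  shows "g w < c \<longleftrightarrow> w \<le> n"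
proof
  assume "g w < c"
  show "w \<le> n"
  proof (rule ccontr)
    assume "\<not> w \<le> n"
    then have "g (Suc n) \<le> g w" using assms(1) by (simp add: monoD)
    with \<open>g w < c\<close> assms(3) show False by simp
  qed
next
  assume "w \<le> n"
  then show "g w < c" using assms(1,2) by (meson le_less_trans monoD)
qed

lemma sum_lessThan_mult:
  fixes f :: "nat \<Rightarrow> 'a::comm_monoid_add"
  shows "(\<Sum>x<N * M. f x) = (\<Sum>u<N. \<Sum>a<M. f (u * M + a))"
proof -
  have "(\<Sum>x<N * M. f x) = (\<Sum>u<N. sum f {u * M..<u * M + M})"
    using sum.nat_group[of f M N] by simp
  also have "\<dots> = (\<Sum>u<N. \<Sum>a<M. f (u * M + a))"
  proof (rule sum.cong[OF refl])
    fix u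
    have "sum f {0 + u * M..<M + u * M} = (\<Sum>a\<in>{0..<M}. f (a + u * M))"
      by (rule sum.shift_bounds_nat_ivl)
    then show "sum f {u * M..<u * M + M} = (\<Sum>a<M. f (u * M + a))"
      by (simp add: add.commute atLeast0LessThan)
  qed
  finally show ?thesis .
qed

lemma sum_lessThan_mult_mod:
  fixes g :: "nat \<Rightarrow> nat"
  shows "(\<Sum>U<N * M. g (U mod M)) = N * (\<Sum>a<M. g a)"
  by (simp add: sum_lessThan_mult)

lemma sum_of_bool_less: "(\<Sum>t<n. of_bool (t < m)) = min n (m::nat)"
  by (induction n) auto

lemma sum_of_bool_le: "(\<Sum>a<n. of_bool (m \<le> a)) = n - (m::nat)"
  by (induction n) auto

lemma lex_less_iff:
  fixes a b X Y Q :: nat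
  assumes "X < Q" "Y < Q"
  shows "a * Q + X < b * Q + Y \<longleftrightarrow> a < b \<or> (a = b \<and> X < Y)"
proof (cases a b rule: linorder_cases)
  case less
  with assms digit_add_less[of a b X Q] show ?thesis by simp
next
  case greater
  with assms digit_add_less[of b a Y Q] show ?thesis by simp
qed simp

lemma sum_of_bool_lex_less:
  fixes b N X Y Q :: nat
  assumes "b < N" "X < Q" "Y < Q"
  shows "(\<Sum>a<N. of_bool (a * Q + X < b * Q + Y)) = b + of_bool (X < Y)"
proof -
  have "(\<Sum>a<N. of_bool (a * Q + X < b * Q + Y)) = (\<Sum>a<N. of_bool (a < b) + of_bool (a = b \<and> X < Y))"
    using lex_less_iff[OF assms(2,3)] by (intro sum.cong) auto
  also have "\<dots> = b + of_bool (X < Y)"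
    using assms(1) by (simp add: sum.distrib sum_of_bool_less sum.delta)
  finally show ?thesis .
qed

lemma sum_of_bool_lex_greater:
  fixes b N X Y Q :: nat
  assumes "b < N" "X < Q" "Y < Q"
  shows "(\<Sum>a<N. of_bool (b * Q + Y < a * Q + X)) = (N - 1 - b) + of_bool (Y < X)"
proof -
  have "(\<Sum>a<N. of_bool (b * Q + Y < a * Q + X)) = (\<Sum>a<N. of_bool (Suc b \<le> a) + of_bool (a = b \<and> Y < X))"
    using lex_less_iff[OF assms(3,2)] by (intro sum.cong) auto
  also have "\<dots> = (N - 1 - b) + of_bool (Y < X)"
    using assms(1) by (simp add: sum.distrib sum_of_bool_le sum.delta)
  finally show ?thesis .
qed

definition repunit :: "nat \<Rightarrow> nat \<Rightarrow> nat" where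
  "repunit p n = (\<Sum>i<n. p^i)"

lemma repunit_0 [simp]: "repunit p 0 = 0"
  by (simp add: repunit_def)

lemma repunit_Suc: "repunit p (Suc n) = repunit p n + p^n"
  by (simp add: repunit_def)

lemma repunit_add: "repunit p (a + b) = repunit p a * p^b + repunit p b"
  by (induction a) (simp_all add: repunit_Suc algebra_simps power_add)

lemma repunit_Suc_left: "repunit p (Suc n) = p * repunit p n + 1"
  using repunit_add[of p n 1] by (simp add: repunit_def)

lemma repunit_pos: "0 < n \<Longrightarrow> 0 < p \<Longrightarrow> 0 < repunit p n"
  by (cases n) (auto simp: repunit_Suc)

lemma repunit_geometric: "0 < p \<Longrightarrow> (p - 1) * repunit p n + 1 = p^n"
proof (induction n)
  case (Suc n)
  have "(p - 1) * repunit p (Suc n) + 1 = ((p - 1) * repunit p n + 1) + (p - 1) * p^n"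
    by (simp add: repunit_Suc distrib_left)
  also have "\<dots> = p^Suc n" using Suc by (cases p) simp_all
  finally show ?case .
qed simp

lemma mult_repunit_less: "0 < p \<Longrightarrow> t \<le> p - 1 \<Longrightarrow> t * repunit p n < p^n"
  using mult_right_mono[of t "p - 1" "repunit p n"] repunit_geometric[of p n] by linarith

lemma pred_mult_repunit_less:
  assumes "1 \<le> t" "t \<le> p" "1 \<le> g"
  shows "(t - 1) * repunit p g < t * p^(g - 1)"
  using assms(3)
proof (induction g rule: nat_induct_at_least)
  case base
  then show ?case using assms by (simp add: repunit_def)
next
  case (Suc g)
  have "(t - 1) * repunit p (Suc g) = p * ((t - 1) * repunit p g) + (t - 1)"
    by (simp add: repunit_Suc_left distrib_left mult.left_commute)
  also have "\<dots> < p * ((t - 1) * repunit p g + 1)" using assms(1,2) by simp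
  also have "\<dots> \<le> p * (t * p^(g - 1))" using Suc.IH by (intro mult_left_mono) auto
  also have "\<dots> = t * p^(Suc g - 1)" using Suc.hyps by (cases g) auto
  finally show ?case .
qed

lemma mult_repunit_div:
  assumes "0 < p" "t \<le> p - 1"
  shows "t * repunit p (a + b) div p^b = t * repunit p a"
proof -
  have "t * repunit p (a + b) = t * repunit p a * p^b + t * repunit p b"
    by (simp add: repunit_add algebra_simps)
  moreover have "t * repunit p b < p^b" using mult_repunit_less assms by simp
  ultimately show ?thesis using assms by simp
qed

lemma repunit_ge_pow: "1 \<le> m \<Longrightarrow> p^(m - 1) \<le> repunit p m"
  by (cases m) (auto simp: repunit_Suc)

lemma sum_pow_diff: "(\<Sum>j<k. p^(k-j-1)) = repunit p k"
  unfolding repunit_def using sum.nat_diff_reindex[of "\<lambda>i. p^i" k] by simp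

definition half :: "nat \<Rightarrow> nat" where
  "half p = (p - 1) div 2"

lemma two_half: "odd p \<Longrightarrow> 2 * half p = p - 1"
  by (auto simp: half_def elim!: oddE)

lemma half_le: "half p \<le> p - 1"
  by (simp add: half_def)

lemma half_pos: "odd p \<Longrightarrow> 3 \<le> p \<Longrightarrow> 0 < half p"
  by (auto simp: half_def elim!: oddE)

lemma sum_lessThan_odd: "odd p \<Longrightarrow> (\<Sum>a<p. a) = p * half p"
  using two_half[of p] gauss_sum_nat[of "p - 1"]
  by (auto simp: lessThan_atLeast0 atLeastLessThanSuc_atLeastAtMost[symmetric] elim!: oddE)

section \<open>Paths of the diagram\<close>

lemma bpaths_iff:
  "q \<in> bpaths p k v \<longleftrightarrow> q \<noteq> [] \<and> (\<exists>i. hd q = Sv i \<and> i < p^k * (p - 1)) \<and> last q = v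
     \<and> successively (bedge p k) q"
  by (simp add: bpaths_def successively_conv_nth)

lemma bedge_to_Sv [simp]: "\<not> bedge p k u (Sv i)"
  by (cases u) auto

lemma bpaths_Sv: "bpaths p k (Sv i) = (if i < p^k * (p - 1) then {[Sv i]} else {})"
proof -
  have "q = [Sv i]" if "q \<in> bpaths p k (Sv i)" for q
  proof -
    from that have "q \<noteq> []" "last q = Sv i" and succ: "successively (bedge p k) q"
      by (simp_all add: bpaths_iff)
    then have q: "q = butlast q @ [Sv i]" by (metis append_butlast_last_id)
    have "butlast q = []"
      using succ by (subst (asm) q) (simp add: successively_append_iff)
    with q show ?thesis by simp
  qed
  then have "bpaths p k (Sv i) \<subseteq> {[Sv i]}" by blast
  moreover have "[Sv i] \<in> bpaths p k (Sv i) \<longleftrightarrow> i < p^k * (p - 1)" by (simp add: bpaths_iff)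
  ultimately show ?thesis by auto
qed

lemma bpaths_snoc_iff:
  assumes "\<And>i. v \<noteq> Sv i"
  shows "q \<in> bpaths p k v \<longleftrightarrow> (\<exists>q0 u. q = q0 @ [v] \<and> q0 \<in> bpaths p k u \<and> bedge p k u v)"
proof
  assume "q \<in> bpaths p k v"
  then obtain i where q: "q \<noteq> []" "hd q = Sv i" "i < p^k * (p - 1)" "last q = v"
    "successively (bedge p k) q"
    by (auto simp: bpaths_iff)
  define q0 where "q0 = butlast q"
  have qq: "q = q0 @ [v]" unfolding q0_def using q(1,4) by (metis append_butlast_last_id)
  have "q0 \<noteq> []" using qq q(2) assms by auto
  then have "q0 \<in> bpaths p k (last q0) \<and> bedge p k (last q0) v"
    using q qq by (auto simp: bpaths_iff successively_append_iff)
  with qq show "\<exists>q0 u. q = q0 @ [v] \<and> q0 \<in> bpaths p k u \<and> bedge p k u v" by blast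
next
  assume "\<exists>q0 u. q = q0 @ [v] \<and> q0 \<in> bpaths p k u \<and> bedge p k u v"
  then show "q \<in> bpaths p k v"
    by (auto simp: bpaths_iff successively_append_iff)
qed

lemma bpaths_last: "q \<in> bpaths p k v \<Longrightarrow> last q = v"
  by (simp add: bpaths_iff)

lemma bpaths_length_ge_2: "q \<in> bpaths p k v \<Longrightarrow> (\<And>i. v \<noteq> Sv i) \<Longrightarrow> 2 \<le> length q"
  by (cases q) (auto simp: bpaths_iff Suc_le_eq split: if_splits)

lemma bedge_to_V1_iff:
  assumes "2 \<le> p"
  shows "bedge p k u (Vv (Suc 0) l) \<longleftrightarrow> l < p^k \<and> (\<exists>t<p - 1. u = Sv (p^k * t + l))"
proof (cases u)
  case (Sv i)
  have "p^k * t + l < p^k * (p - 1)" if "t < p - 1" "l < p^k" for t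
    using digit_add_less[OF that] by (simp add: mult.commute)
  with Sv assms show ?thesis by (auto simp: less_Suc_eq_le[symmetric])
qed auto

lemma bedge_to_Wv_iff:
  assumes "0 < p"
  shows "bedge p k u (Wv s w) \<longleftrightarrow> 2 \<le> s \<and> w < p^(k+1) \<and> u = Vv (s - 1) (w div p)"
proof (cases u)
  case (Vv s0 l)
  have "(l < p^k \<and> (\<exists>\<beta>\<le>p - 1. w = p * l + \<beta>)) \<longleftrightarrow> l = w div p" if "w < p^(k+1)"
    using that assms
    by (auto simp: less_Suc_eq_le[symmetric] div_less_iff_less_mult mult.commute intro: exI[of _ "w mod p"])
  with Vv show ?thesis by auto
qed auto

lemma bedge_to_Vv_iff:
  assumes "0 < p" "2 \<le> s"
  shows "bedge p k u (Vv s l) \<longleftrightarrow> l < p^k \<and> (\<exists>a<p. u = Wv s (a * p^k + l))"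
proof (cases u)
  case (Wv s' w)
  have "(w < p^(k+1) \<and> l < p^k \<and> l = w mod p^k) \<longleftrightarrow> l < p^k \<and> (\<exists>a<p. w = a * p^k + l)"
  proof safe
    assume "w < p^(k+1)" "l = w mod p^k"
    then show "\<exists>a<p. w = a * p^k + w mod p^k"
      using assms by (intro exI[of _ "w div p^k"]) (auto simp: div_less_iff_less_mult mult.commute)
  next
    fix a assume "a < p" "l < p^k"
    from digit_add_less[OF this] show "a * p^k + l < p^(k+1)" by simp
  qed simp
  with Wv assms show ?thesis
    by (auto simp: minus_div_mult_eq_mod[symmetric] mult.commute)
qed (use assms in auto)

lemma bpaths_V1:
  assumes "2 \<le> p" "l < p^k"
  shows "bpaths p k (Vv (Suc 0) l) = (\<lambda>t. [Sv (p^k * t + l), Vv (Suc 0) l]) ` {..<p - 1}"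
proof -
  have paths: "q \<in> bpaths p k (Vv (Suc 0) l) \<longleftrightarrow>
      (\<exists>q0. \<exists>t<p - 1. q = q0 @ [Vv (Suc 0) l] \<and> q0 \<in> bpaths p k (Sv (p^k * t + l)))" for q
    using assms by (auto simp: bpaths_snoc_iff bedge_to_V1_iff)
  have "p^k * t + l < p^k * (p - 1)" if "t < p - 1" for t
    using digit_add_less[OF that assms(2)] by (simp add: mult.commute)
  then have "q \<in> bpaths p k (Vv (Suc 0) l) \<longleftrightarrow> (\<exists>t<p - 1. q = [Sv (p^k * t + l), Vv (Suc 0) l])"
    for q unfolding paths by (fastforce simp: bpaths_Sv)
  then show ?thesis by blast
qed

lemma bpaths_Wv:
  assumes "0 < p" "2 \<le> s" "w < p^(k+1)"
  shows "bpaths p k (Wv s w) = (\<lambda>q. q @ [Wv s w]) ` bpaths p k (Vv (s - 1) (w div p))"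
proof -
  have "q \<in> bpaths p k (Wv s w) \<longleftrightarrow> (\<exists>q0 \<in> bpaths p k (Vv (s - 1) (w div p)). q = q0 @ [Wv s w])" for q
    using assms by (auto simp: bpaths_snoc_iff bedge_to_Wv_iff)
  then show ?thesis by blast
qed

lemma bpaths_Vv:
  assumes "0 < p" "2 \<le> s" "l < p^k"
  shows "bpaths p k (Vv s l) =
    (\<lambda>(a, q). q @ [Vv s l]) ` (SIGMA a:{..<p}. bpaths p k (Wv s (a * p^k + l)))"
proof -
  have "q \<in> bpaths p k (Vv s l) \<longleftrightarrow>
      (\<exists>a<p. \<exists>q0 \<in> bpaths p k (Wv s (a * p^k + l)). q = q0 @ [Vv s l])" for q
    using assms by (auto simp: bpaths_snoc_iff bedge_to_Vv_iff)
  then show ?thesis by (auto simp: image_iff) (use lessThan_iff in blast)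
qed

lemma inj_on_snoc_Vv:
  assumes "0 < p"
  shows "inj_on (\<lambda>(a, q). q @ [Vv s l]) (SIGMA a:{..<p}. bpaths p k (Wv s (a * p^k + l)))"
  using assms by (intro inj_onI) (auto dest!: bpaths_last)

lemma finite_card_bpaths_Vv:
  assumes "2 \<le> p" "1 \<le> s" "l < p^k"
  shows "finite (bpaths p k (Vv s l)) \<and> card (bpaths p k (Vv s l)) = (p - 1) * p^(s - 1)"
  using assms(2,3)
proof (induction s arbitrary: l rule: nat_induct_at_least)
  case base
  have "inj_on (\<lambda>t. [Sv (p^k * t + l), Vv (Suc 0) l]) {..<p - 1}"
    using assms(1) by (intro inj_onI) simp
  with base show ?case by (simp add: bpaths_V1[OF assms(1)] card_image)
next
  case (Suc n)
  have p: "0 < p" using assms(1) by simp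
  have W: "finite (bpaths p k (Wv (Suc n) (a * p^k + l)))
      \<and> card (bpaths p k (Wv (Suc n) (a * p^k + l))) = (p - 1) * p^(n - 1)" if "a < p" for a
  proof -
    have w: "a * p^k + l < p^(k+1)" using digit_add_less[OF that Suc.prems] by simp
    then have "(a * p^k + l) div p < p^k" using p by (simp add: div_less_iff_less_mult mult.commute)
    with Suc.IH show ?thesis
      using Suc.hyps by (simp add: bpaths_Wv[OF p _ w] card_image inj_on_def)
  qed
  then have "card (SIGMA a:{..<p}. bpaths p k (Wv (Suc n) (a * p^k + l))) = p * ((p - 1) * p^(n - 1))"
    by (subst card_SigmaI) auto
  also have "\<dots> = (p - 1) * p^(Suc n - 1)"
    using Suc.hyps by (cases n) auto
  moreover have "finite (SIGMA a:{..<p}. bpaths p k (Wv (Suc n) (a * p^k + l)))"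
    using W by auto
  ultimately show ?case
    using Suc.hyps Suc.prems by (simp add: bpaths_Vv[OF p] card_image[OF inj_on_snoc_Vv[OF p]])
qed

lemma finite_card_bpaths_Wv:
  assumes "2 \<le> p" "2 \<le> s" "w < p^(k+1)"
  shows "finite (bpaths p k (Wv s w)) \<and> card (bpaths p k (Wv s w)) = (p - 1) * p^(s - 2)"
proof -
  have p: "0 < p" using assms(1) by simp
  then have "w div p < p^k" using assms(3) by (simp add: div_less_iff_less_mult mult.commute)
  then have "finite (bpaths p k (Vv (s - 1) (w div p)))
      \<and> card (bpaths p k (Vv (s - 1) (w div p))) = (p - 1) * p^(s - 2)"
    using finite_card_bpaths_Vv[OF assms(1), of "s - 1"] assms(2) by (simp add: numeral_2_eq_2)
  then show ?thesis
    by (simp add: bpaths_Wv[OF p assms(2,3)] card_image inj_on_def)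
qed

lemma sum_bpaths_Wv:
  assumes "0 < p" "2 \<le> s" "w < p^(k+1)"
  shows "(\<Sum>q\<in>bpaths p k (Wv s w). f q) = (\<Sum>q\<in>bpaths p k (Vv (s - 1) (w div p)). f (q @ [Wv s w]))"
  unfolding bpaths_Wv[OF assms] by (simp add: sum.reindex inj_on_def)

lemma sum_bpaths_Vv:
  assumes "2 \<le> p" "2 \<le> s" "l < p^k"
  shows "(\<Sum>q\<in>bpaths p k (Vv s l). f q) =
    (\<Sum>a<p. \<Sum>q\<in>bpaths p k (Wv s (a * p^k + l)). f (q @ [Vv s l]))"
proof -
  have p: "0 < p" using assms(1) by simp
  have "finite (bpaths p k (Wv s (a * p^k + l)))" if "a < p" for a
    using finite_card_bpaths_Wv[OF assms(1,2)] digit_add_less[OF that assms(3)] by simp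
  then have "(\<Sum>a<p. \<Sum>q\<in>bpaths p k (Wv s (a * p^k + l)). f (q @ [Vv s l])) =
      (\<Sum>(a, q)\<in>(SIGMA a:{..<p}. bpaths p k (Wv s (a * p^k + l))). f (q @ [Vv s l]))"
    by (intro sum.Sigma) auto
  then show ?thesis
    unfolding bpaths_Vv[OF p assms(2,3)] sum.reindex[OF inj_on_snoc_Vv[OF p]]
    by (simp add: comp_def case_prod_beta)
qed

section \<open>Descents along a path\<close>

definition block_descent :: "nat \<times> nat \<Rightarrow> nat \<times> nat \<Rightarrow> bool" where
  "block_descent b b' \<longleftrightarrow> fst b' < fst b \<and> snd b < snd b'"

lemma Bm_append:
  assumes "0 < j" "j \<le> length q"
  shows "Bm p k (q @ xs) j = Bm p k q j"
proof -
  have "j - 2 < length q" "j - 1 < length q" using assms by auto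
  then show ?thesis by (simp add: Bm_def nth_append)
qed

lemma Bn_append:
  assumes "0 < j" "j \<le> length q"
  shows "Bn p k (q @ xs) j = Bn p k q j"
proof -
  have "j - 2 < length q" "j - 1 < length q" using assms by auto
  then show ?thesis by (simp add: Bn_def nth_append)
qed

lemma Des_subset: "Des p k q \<subseteq> {..<length q}"
  by (auto simp: Des_def)

lemma Des_append_two:
  assumes "q \<noteq> []"
  shows "Des p k (q @ [u, x]) = Des p k (q @ [u]) \<union>
    {j. j = Suc (length q) \<and> 2 \<le> length q \<and> block_descent (bblock p k (last q) u) (bblock p k u x)}"
proof (rule set_eqI)
  fix j
  consider "j < Suc (length q)" | "j = Suc (length q)" | "Suc (length q) < j" by linarith
  then show "j \<in> Des p k (q @ [u, x]) \<longleftrightarrow> j \<in> Des p k (q @ [u]) \<union>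
    {j. j = Suc (length q) \<and> 2 \<le> length q \<and> block_descent (bblock p k (last q) u) (bblock p k u x)}"
  proof cases
    case 1
    have "Bm p k (q @ [u, x]) i = Bm p k (q @ [u]) i" "Bn p k (q @ [u, x]) i = Bn p k (q @ [u]) i"
      if "0 < i" "i \<le> Suc (length q)" for i
      using that Bm_append[of i "q @ [u]" p k "[x]"] Bn_append[of i "q @ [u]" p k "[x]"] by simp_all
    with 1 assms show ?thesis by (auto simp: Des_def Suc_le_eq)
  next
    case 2
    have "Bm p k (q @ [u, x]) j = fst (bblock p k (last q) u)"
      "Bn p k (q @ [u, x]) j = snd (bblock p k (last q) u)"
      "Bm p k (q @ [u, x]) (j + 1) = fst (bblock p k u x)"
      "Bn p k (q @ [u, x]) (j + 1) = snd (bblock p k u x)"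
      using 2 assms by (simp_all add: Bm_def Bn_def nth_append last_conv_nth)
    moreover have "j \<notin> Des p k (q @ [u])" using 2 Des_subset by fastforce
    ultimately show ?thesis using 2 assms by (auto simp: Des_def block_descent_def)
  next
    case 3
    then show ?thesis using Des_subset[of p k "q @ [u, x]"] Des_subset[of p k "q @ [u]"] by auto
  qed
qed

lemma des_append_two:
  assumes "q \<noteq> []"
  shows "des p k (q @ [u, x]) = des p k (q @ [u])
    + of_bool (2 \<le> length q \<and> block_descent (bblock p k (last q) u) (bblock p k u x))"
proof -
  have "finite (Des p k (q @ [u]))" by (rule finite_subset[OF Des_subset]) simp
  moreover have "Suc (length q) \<notin> Des p k (q @ [u])" using Des_subset by fastforce
  ultimately show ?thesis
    unfolding des_def Des_append_two[OF assms] by (auto simp: card_insert_if)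
qed

lemma des_start:
  assumes "0 < p"
  shows "des p k [Sv i, Vv s l] = of_bool (2 * (i div p^k) < p - 1)"
proof -
  have "Des p k [Sv i, Vv s l] = {j. j = 1 \<and> 2 * (i div p^k) < p - 1}"
    using assms by (auto simp: Des_def Bm_def Let_def)
  then show ?thesis by (simp add: des_def)
qed

(* The vertical part (p - 1) l + beta of the block on the edge V_{s-1,l} -> W_{s,w}, w = p l + beta. *)
definition vert_VW :: "nat \<Rightarrow> nat \<Rightarrow> nat" where
  "vert_VW p w = w - w div p"

lemma bblock_Vv_Wv:
  "bblock p k (Vv s0 (w div p)) (Wv s w) = (p^k * (p - 1) - vert_VW p w, vert_VW p w)"
proof -
  have "(p - 1) * (w div p) + (w - p * (w div p)) = w - w div p"
    using div_mult_mod_eq[of w p] by (cases p) (simp_all add: algebra_simps)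
  then show ?thesis by (simp add: Let_def vert_VW_def)
qed

lemma bblock_Wv_Vv: "bblock p k (Wv s w) (Vv s2 l) = (p^k * (w div p^k), p^k * (p - 1 - w div p^k))"
  by (simp add: Let_def)

(* Keep bblock folded, so that the two lemmas above apply as rewrite rules. *)
declare bblock.simps [simp del]

lemma mono_vert_VW: "mono (vert_VW p)"
  by (auto simp: mono_iff_le_Suc vert_VW_def div_Suc)

lemma vert_VW_digits:
  assumes "r < p"
  shows "vert_VW p (p * q + r) = (p - 1) * q + r"
  using assms by (simp add: vert_VW_def algebra_simps)

lemma descent_at_W_iff:
  assumes "odd p" "3 \<le> p" "1 \<le> k"
  shows "block_descent (bblock p k (Vv s0 (w div p)) (Wv s w)) (bblock p k (Wv s w) (Vv s2 l))
    \<longleftrightarrow> w < half p * repunit p (k+1)"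
proof -
  define P where "P = p^k"
  define h where "h = half p"
  define r where "r = repunit p k"
  define g where "g w = vert_VW p w + P * (w div P)" for w
  have p: "p = 2 * h + 1" using two_half[OF assms(1)] assms(2) unfolding h_def by simp
  have h: "0 < h" using half_pos assms unfolding h_def by auto
  have r: "0 < r" unfolding r_def using assms repunit_pos by simp
  have P: "P = 2 * h * r + 1"
    using repunit_geometric[of p k] p unfolding P_def r_def by simp
  have w0: "h * repunit p (k+1) = p * (h * r) + h"
    unfolding r_def by (simp add: repunit_Suc_left algebra_simps)
  have hr: "0 < h * r" "h * r < P" using h r P by simp_all
  have hP: "(p - 1) * (h * r) + h = P * h" "P * (p - 1) = 2 * (P * h)" by (simp_all add: p P algebra_simps)
  have w0': "h * repunit p (k+1) = h * P + h * r" using w0 by (simp add: p P algebra_simps)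
  \<comment> \<open>g is nondecreasing and reaches P (p - 1) at h R_(k+1), all of whose base-p digits are h.\<close>
  have "block_descent (bblock p k (Vv s0 (w div p)) (Wv s w)) (bblock p k (Wv s w) (Vv s2 l))
      \<longleftrightarrow> g w < P * (p - 1)"
    by (auto simp: block_descent_def bblock_Vv_Wv bblock_Wv_Vv g_def P_def diff_mult_distrib2)
  also have "\<dots> \<longleftrightarrow> w \<le> h * repunit p (k+1) - 1"
  proof (rule mono_less_iff_le)
    show "mono g"
      unfolding g_def by (intro monoI add_mono monoD[OF mono_vert_VW] mult_le_mono2 div_le_mono)
    have A: "h * repunit p (k+1) - 1 = p * (h * r) + (h - 1)" using w0 h by linarith
    have B: "h * repunit p (k+1) - 1 = h * P + (h * r - 1)" using w0' hr by linarith
    have "vert_VW p (h * repunit p (k+1) - 1) = (p - 1) * (h * r) + (h - 1)"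
      unfolding A using p by (intro vert_VW_digits) simp
    moreover have "(h * repunit p (k+1) - 1) div P = h"
    proof -
      have "(h * P + (h * r - 1)) div P = h + (h * r - 1) div P"
        by (rule div_mult_self3) (use hr in simp)
      with hr show ?thesis unfolding B by simp
    qed
    ultimately have "g (h * repunit p (k+1) - 1) = (p - 1) * (h * r) + (h - 1) + P * h"
      unfolding g_def by simp
    then show "g (h * repunit p (k+1) - 1) < P * (p - 1)" using hP h by linarith
    have "vert_VW p (h * repunit p (k+1)) = (p - 1) * (h * r) + h"
      unfolding w0 using p by (intro vert_VW_digits) simp
    moreover have "h * repunit p (k+1) div P = h" unfolding w0' using hr by (intro div_nat_eqI) simp_all
    ultimately have "g (h * repunit p (k+1)) = (p - 1) * (h * r) + h + P * h"
      unfolding g_def by simp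
    moreover have "Suc (h * repunit p (k+1) - 1) = h * repunit p (k+1)" using w0 h by simp
    ultimately show "P * (p - 1) \<le> g (Suc (h * repunit p (k+1) - 1))" using hP by (simp only:)
  qed
  also have "\<dots> \<longleftrightarrow> w < half p * repunit p (k+1)"
    using h r w0 unfolding h_def by auto
  finally show ?thesis .
qed

lemma descent_at_V_iff:
  assumes "2 \<le> p" "a < p" "w < p^(k+1)"
  shows "block_descent (bblock p k (Wv s (a * p^k + w div p)) (Vv s (w div p)))
      (bblock p k (Vv s (w div p)) (Wv s' w))
    \<longleftrightarrow> (p - 1 - a) * repunit p (k+1) < w"
proof -
  define P where "P = p^k"
  define e where "e = p - 1 - a"
  define r where "r = repunit p k"
  have p: "0 < p" using assms by simp
  have P: "P = (p - 1) * r + 1" using repunit_geometric[OF p, of k] unfolding P_def r_def by simp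
  have wp: "w div p < P" using assms(3) p unfolding P_def by (simp add: div_less_iff_less_mult mult.commute)
  have X: "vert_VW p w \<le> P * (p - 1)"
  proof -
    have P0: "0 < P" unfolding P_def using p by simp
    have "w < p * P" using assms(3) unfolding P_def by simp
    then have "w \<le> p * (P - 1) + (p - 1)" using P0 p by (cases P; cases p) auto
    then have "vert_VW p w \<le> vert_VW p (p * (P - 1) + (p - 1))" by (rule monoD[OF mono_vert_VW])
    also have "\<dots> = (p - 1) * (P - 1) + (p - 1)" using p by (intro vert_VW_digits) simp
    also have "\<dots> = P * (p - 1)" using P0 by (cases P) (simp_all add: mult.commute)
    finally show ?thesis .
  qed
  have "block_descent (bblock p k (Wv s (a * p^k + w div p)) (Vv s (w div p)))
      (bblock p k (Vv s (w div p)) (Wv s' w)) \<longleftrightarrow> P * e < vert_VW p w"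
    using X assms(2) wp
    by (auto simp: block_descent_def bblock_Vv_Wv bblock_Wv_Vv P_def e_def diff_mult_distrib2)
  also have "\<dots> \<longleftrightarrow> e * repunit p (k+1) < w"
  proof (cases "e = p - 1")
    case True
    have "e * repunit p (k+1) + 1 = p^(k+1)" using repunit_geometric[OF p] True by simp
    with True X assms(3) show ?thesis by (simp add: mult.commute)
  next
    case False
    then have e: "e + 1 < p" unfolding e_def using p by linarith
    have n: "e * repunit p (k+1) = p * (e * r) + e"
      unfolding r_def by (simp add: repunit_Suc_left algebra_simps)
    have Pe: "P * e = (p - 1) * (e * r) + e" by (simp add: P algebra_simps)
    have "vert_VW p w < P * e + 1 \<longleftrightarrow> w \<le> e * repunit p (k+1)"
    proof (rule mono_less_iff_le[OF mono_vert_VW])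
      show "vert_VW p (e * repunit p (k+1)) < P * e + 1"
        unfolding n Pe using e by (simp add: vert_VW_digits)
      have "Suc (e * repunit p (k+1)) = p * (e * r) + (e + 1)" using n by simp
      then have "vert_VW p (Suc (e * repunit p (k+1))) = (p - 1) * (e * r) + (e + 1)"
        using vert_VW_digits[OF e] by simp
      then show "P * e + 1 \<le> vert_VW p (Suc (e * repunit p (k+1)))"
        unfolding Pe by simp
    qed
    then show ?thesis by linarith
  qed
  finally show ?thesis unfolding e_def .
qed

lemma des_snoc_Vv:
  assumes "odd p" "3 \<le> p" "1 \<le> k" "2 \<le> s" "w < p^(k+1)" "q \<in> bpaths p k (Wv s w)"
  shows "des p k (q @ [Vv s' l]) = des p k q + of_bool (w < half p * repunit p (k+1))"
proof -
  have p: "0 < p" using assms(2) by simp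
  obtain q0 where q: "q = q0 @ [Wv s w]" "q0 \<in> bpaths p k (Vv (s - 1) (w div p))"
    using assms(6) bpaths_Wv[OF p assms(4,5)] by auto
  have "q0 \<noteq> []" "2 \<le> length q0" "last q0 = Vv (s - 1) (w div p)"
    using bpaths_length_ge_2[OF q(2)] bpaths_last[OF q(2)] by auto
  then show ?thesis
    unfolding q(1) using des_append_two[of q0 p k "Wv s w" "Vv s' l"] descent_at_W_iff[OF assms(1-3)]
    by simp
qed

lemma des_snoc_Vv_Wv:
  assumes "2 \<le> p" "a < p" "w < p^(k+1)" "q \<in> bpaths p k (Wv s (a * p^k + w div p))"
  shows "des p k (q @ [Vv s (w div p), Wv s' w]) =
    des p k (q @ [Vv s (w div p)]) + of_bool ((p - 1 - a) * repunit p (k+1) < w)"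
proof -
  have "q \<noteq> []" "2 \<le> length q" "last q = Wv s (a * p^k + w div p)"
    using bpaths_length_ge_2[OF assms(4)] bpaths_last[OF assms(4)] by auto
  then show ?thesis
    using des_append_two[of q p k "Vv s (w div p)" "Wv s' w"] descent_at_V_iff[OF assms(1-3)]
    by simp
qed

section \<open>Recurrences and the digit coding of paths\<close>

lemma fibM_V1:
  assumes "odd p" "2 \<le> p" "l < p^k"
  shows "fibM p k (Vv (Suc 0) l) = half p"
proof -
  have "inj_on (\<lambda>t. [Sv (p^k * t + l), Vv (Suc 0) l]) {..<p - 1}"
    using assms(2) by (intro inj_onI) simp
  then have "fibM p k (Vv (Suc 0) l) = (\<Sum>t<p - 1. des p k [Sv (p^k * t + l), Vv (Suc 0) l])"
    by (simp add: fibM_def bpaths_V1[OF assms(2,3)] sum.reindex)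
  also have "\<dots> = (\<Sum>t<p - 1. of_bool (t < half p))"
    using assms two_half[OF assms(1)] by (intro sum.cong) (auto simp: des_start)
  also have "\<dots> = half p"
    using half_le[of p] by (simp add: sum_of_bool_less)
  finally show ?thesis .
qed

lemma fibM_Vv_rec:
  assumes "odd p" "3 \<le> p" "1 \<le> k" "2 \<le> s" "l < p^k"
  shows "fibM p k (Vv s l) = (\<Sum>a<p. fibM p k (Wv s (a * p^k + l))
    + (p - 1) * p^(s - 2) * of_bool (a * p^k + l < half p * repunit p (k+1)))"
proof -
  have p: "2 \<le> p" using assms(2) by simp
  have w: "a * p^k + l < p^(k+1)" if "a < p" for a
    using digit_add_less[OF that assms(5)] by simp
  have "fibM p k (Vv s l) = (\<Sum>a<p. \<Sum>q\<in>bpaths p k (Wv s (a * p^k + l)). des p k (q @ [Vv s l]))"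
    by (simp add: fibM_def sum_bpaths_Vv[OF p assms(4,5)])
  also have "\<dots> = (\<Sum>a<p. \<Sum>q\<in>bpaths p k (Wv s (a * p^k + l)).
      des p k q + of_bool (a * p^k + l < half p * repunit p (k+1)))"
    using des_snoc_Vv[OF assms(1-4) w] by (intro sum.cong) auto
  also have "\<dots> = (\<Sum>a<p. fibM p k (Wv s (a * p^k + l))
      + (p - 1) * p^(s - 2) * of_bool (a * p^k + l < half p * repunit p (k+1)))"
    using finite_card_bpaths_Wv[OF p assms(4) w] by (intro sum.cong) (simp_all add: sum.distrib fibM_def)
  finally show ?thesis .
qed

lemma fibM_Wv_rec:
  assumes "2 \<le> p" "2 \<le> s" "w < p^(k+1)"
  shows "fibM p k (Wv s w) = fibM p k (Vv (s - 1) (w div p))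
    + (if 3 \<le> s then (p - 1) * p^(s - 3) * (\<Sum>a<p. of_bool ((p - 1 - a) * repunit p (k+1) < w)) else 0)"
proof -
  have p: "0 < p" using assms(1) by simp
  have wp: "w div p < p^k" using assms(3) p by (simp add: div_less_iff_less_mult mult.commute)
  have fibW: "fibM p k (Wv s w) = (\<Sum>q\<in>bpaths p k (Vv (s - 1) (w div p)). des p k (q @ [Wv s w]))"
    by (simp add: fibM_def sum_bpaths_Wv[OF p assms(2,3)])
  show ?thesis
  proof (cases "s = 2")
    case True
    have "des p k ([Sv i] @ [Vv (Suc 0) (w div p), Wv s w]) = des p k ([Sv i] @ [Vv (Suc 0) (w div p)])"
      for i using des_append_two[of "[Sv i]"] by simp
    with True show ?thesis
      unfolding fibW by (simp add: fibM_def bpaths_V1[OF assms(1) wp] sum.reindex inj_on_def)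
  next
    case False
    then have s: "2 \<le> s - 1" using assms(2) by simp
    have v: "a * p^k + w div p < p^(k+1)" if "a < p" for a
      using digit_add_less[OF that wp] by simp
    have card: "card (bpaths p k (Wv (s - 1) (a * p^k + w div p))) = (p - 1) * p^(s - 3)" if "a < p" for a
      using finite_card_bpaths_Wv[OF assms(1) s v[OF that]] by (simp add: numeral_3_eq_3)
    have "fibM p k (Wv s w) = (\<Sum>a<p. \<Sum>q\<in>bpaths p k (Wv (s - 1) (a * p^k + w div p)).
        des p k (q @ [Vv (s - 1) (w div p), Wv s w]))"
      unfolding fibW sum_bpaths_Vv[OF assms(1) s wp] by simp
    also have "\<dots> = (\<Sum>a<p. \<Sum>q\<in>bpaths p k (Wv (s - 1) (a * p^k + w div p)).
        des p k (q @ [Vv (s - 1) (w div p)]) + of_bool ((p - 1 - a) * repunit p (k+1) < w))"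
      using des_snoc_Vv_Wv[OF assms(1) _ assms(3)] by (intro sum.cong) auto
    also have "\<dots> = fibM p k (Vv (s - 1) (w div p))
        + (\<Sum>a<p. (p - 1) * p^(s - 3) * of_bool ((p - 1 - a) * repunit p (k+1) < w))"
      unfolding fibM_def sum_bpaths_Vv[OF assms(1) s wp] using card by (simp add: sum.distrib)
    finally show ?thesis using False assms(2) by (simp add: sum_distrib_left)
  qed
qed

definition window :: "nat \<Rightarrow> nat \<Rightarrow> nat \<Rightarrow> nat \<Rightarrow> nat" where
  "window p k D j = D div p^j mod p^(k+1)"

definition digit :: "nat \<Rightarrow> nat \<Rightarrow> nat \<Rightarrow> nat" where
  "digit p D i = D div p^i mod p"

(* The descents at positions >= 3 of a path coded by D (see the top of the file): one per window
  below h R_(k+1), and one per window w exceeding (p - 1 - a) R_(k+1), a the digit just above w. *)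
definition coded_des :: "nat \<Rightarrow> nat \<Rightarrow> nat \<Rightarrow> nat \<Rightarrow> nat" where
  "coded_des p k s D =
     (\<Sum>j<s - 1. of_bool (window p k D j < half p * repunit p (k+1)))
   + (\<Sum>j<s - 2. of_bool ((p - 1 - digit p D (j+k+1)) * repunit p (k+1) < window p k D j))"

lemma window_Suc: "window p k D (Suc j) = window p k (D div p) j"
  by (simp add: window_def div_mult2_eq)

lemma digit_Suc: "digit p D (Suc j) = digit p (D div p) j"
  by (simp add: digit_def div_mult2_eq)

lemma coded_des_Suc:
  assumes "1 \<le> s"
  shows "coded_des p k (Suc s) D = coded_des p k s (D div p)
    + of_bool (D mod p^(k+1) < half p * repunit p (k+1))
    + of_bool (2 \<le> s \<and> (p - 1 - digit p D (k+1)) * repunit p (k+1) < D mod p^(k+1))"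
proof -
  obtain n where n: "s = Suc n" using assms by (cases s) auto
  have "window p k D 0 = D mod p^(k+1)" by (simp add: window_def)
  then show ?thesis
    unfolding coded_des_def n
    by (cases n) (simp_all add: sum.lessThan_Suc_shift window_Suc digit_Suc del: sum.lessThan_Suc)
qed

lemma coded_des_Suc_shifted:
  assumes "0 < p" "1 \<le> n" "a < p" "l < p^k"
  shows "coded_des p k (Suc n) ((U * p + a) * p^k + l) = coded_des p k n (U * p^k + (a * p^k + l) div p)
    + of_bool (a * p^k + l < half p * repunit p (k+1))
    + of_bool (2 \<le> n \<and> (p - 1 - U mod p) * repunit p (k+1) < a * p^k + l)"
proof -
  have w: "a * p^k + l < p^(k+1)" using digit_add_less[OF assms(3,4)] by simp
  have pk: "p^(k+1) \<noteq> 0" using assms(1) by simp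
  have D: "(U * p + a) * p^k + l = U * p^(k+1) + (a * p^k + l)"
    "(U * p + a) * p^k + l = (a * p^k + l) + (U * p^k) * p"
    by (simp_all add: algebra_simps)
  have "((U * p + a) * p^k + l) mod p^(k+1) = a * p^k + l"
    unfolding D(1) mod_mult_self3 using w by (rule mod_less)
  moreover have "digit p ((U * p + a) * p^k + l) (k+1) = U mod p"
    unfolding digit_def D(1) div_mult_self3[OF pk] div_less[OF w] by simp
  moreover have "((U * p + a) * p^k + l) div p = U * p^k + (a * p^k + l) div p"
    using assms(1) unfolding D(2) by simp
  ultimately show ?thesis unfolding coded_des_Suc[OF assms(2)] by simp
qed

lemma sum_coded_des_Suc:
  assumes "0 < p" "1 \<le> n" "l < p^k"
  shows "(\<Sum>U<p^n. coded_des p k (Suc n) (U * p^k + l)) =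
    (\<Sum>a<p. (\<Sum>U<p^(n - 1). coded_des p k n (U * p^k + (a * p^k + l) div p))
      + p^(n - 1) * of_bool (a * p^k + l < half p * repunit p (k+1))
      + (if 2 \<le> n then p^(n - 2) * (\<Sum>b<p. of_bool ((p - 1 - b) * repunit p (k+1) < a * p^k + l)) else 0))"
proof -
  have "(\<Sum>U<p^n. coded_des p k (Suc n) (U * p^k + l)) =
      (\<Sum>U<p^(n - 1). \<Sum>a<p. coded_des p k (Suc n) ((U * p + a) * p^k + l))"
    using sum_lessThan_mult[of _ "p^(n - 1)" p] assms(2) by (simp flip: power_Suc2)
  also have "\<dots> = (\<Sum>U<p^(n - 1). \<Sum>a<p. coded_des p k n (U * p^k + (a * p^k + l) div p)
      + of_bool (a * p^k + l < half p * repunit p (k+1))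
      + of_bool (2 \<le> n \<and> (p - 1 - U mod p) * repunit p (k+1) < a * p^k + l))"
    using coded_des_Suc_shifted[OF assms(1,2) _ assms(3)] by (intro sum.cong refl) simp
  also have "\<dots> = (\<Sum>a<p. \<Sum>U<p^(n - 1). coded_des p k n (U * p^k + (a * p^k + l) div p)
      + of_bool (a * p^k + l < half p * repunit p (k+1))
      + of_bool (2 \<le> n \<and> (p - 1 - U mod p) * repunit p (k+1) < a * p^k + l))"
    by (rule sum.swap)
  also have "\<dots> = (\<Sum>a<p. (\<Sum>U<p^(n - 1). coded_des p k n (U * p^k + (a * p^k + l) div p))
      + p^(n - 1) * of_bool (a * p^k + l < half p * repunit p (k+1))
      + (if 2 \<le> n then p^(n - 2) * (\<Sum>b<p. of_bool ((p - 1 - b) * repunit p (k+1) < a * p^k + l)) else 0))"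
  proof (intro sum.cong refl)
    fix a
    have "(\<Sum>U<p^(n - 1). of_bool ((p - 1 - U mod p) * repunit p (k+1) < a * p^k + l))
        = p^(n - 2) * (\<Sum>b<p. of_bool ((p - 1 - b) * repunit p (k+1) < a * p^k + l))" if "2 \<le> n"
    proof -
      have "n - 1 = Suc (n - 2)" using that by simp
      then have "p^(n - 1) = p^(n - 2) * p" by (simp only: power_Suc2)
      then show ?thesis
        by (simp only:) (rule sum_lessThan_mult_mod[of "\<lambda>b. of_bool ((p - 1 - b) * repunit p (k+1) < a * p^k + l)"])
    qed
    then show "(\<Sum>U<p^(n - 1). coded_des p k n (U * p^k + (a * p^k + l) div p)
      + of_bool (a * p^k + l < half p * repunit p (k+1))
      + of_bool (2 \<le> n \<and> (p - 1 - U mod p) * repunit p (k+1) < a * p^k + l)) =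
      (\<Sum>U<p^(n - 1). coded_des p k n (U * p^k + (a * p^k + l) div p))
      + p^(n - 1) * of_bool (a * p^k + l < half p * repunit p (k+1))
      + (if 2 \<le> n then p^(n - 2) * (\<Sum>b<p. of_bool ((p - 1 - b) * repunit p (k+1) < a * p^k + l)) else 0)"
      by (simp add: sum.distrib)
  qed
  finally show ?thesis .
qed

lemma fibM_Vv_coded:
  assumes "odd p" "3 \<le> p" "1 \<le> k" "1 \<le> s" "l < p^k"
  shows "fibM p k (Vv s l) = half p * p^(s - 1) + (p - 1) * (\<Sum>U<p^(s - 1). coded_des p k s (U * p^k + l))"
  using assms(4,5)
proof (induction s arbitrary: l rule: nat_induct_at_least)
  case base
  then show ?case using fibM_V1[OF assms(1)] assms(2) by (simp add: coded_des_def)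
next
  case (Suc n)
  have p: "2 \<le> p" "0 < p" using assms(2) by auto
  have low: "a * p^k + l < p^(k+1)" if "a < p" for a
    using digit_add_less[OF that Suc.prems] by simp
  then have shifted: "(a * p^k + l) div p < p^k" if "a < p" for a
    using that p by (simp add: div_less_iff_less_mult mult.commute)
  define T where "T a = (\<Sum>U<p^(n - 1). coded_des p k n (U * p^k + (a * p^k + l) div p))
      + p^(n - 1) * of_bool (a * p^k + l < half p * repunit p (k+1))
      + (if 2 \<le> n then p^(n - 2) * (\<Sum>b<p. of_bool ((p - 1 - b) * repunit p (k+1) < a * p^k + l)) else 0)"
    for a
  have "fibM p k (Wv (Suc n) (a * p^k + l)) + (p - 1) * p^(Suc n - 2) * of_bool (a * p^k + l < half p * repunit p (k+1))
      = half p * p^(n - 1) + (p - 1) * T a" if "a < p" for a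
  proof -
    have "fibM p k (Wv (Suc n) (a * p^k + l)) = fibM p k (Vv n ((a * p^k + l) div p))
        + (p - 1) * (if 2 \<le> n then p^(n - 2) * (\<Sum>b<p. of_bool ((p - 1 - b) * repunit p (k+1) < a * p^k + l)) else 0)"
      using fibM_Wv_rec[OF p(1) _ low[OF that], of "Suc n"] Suc.hyps
      by (cases "2 \<le> n") (simp_all add: mult.assoc numeral_3_eq_3 numeral_2_eq_2)
    then show ?thesis
      using Suc.IH[OF shifted[OF that]] unfolding T_def by (simp add: distrib_left mult.assoc)
  qed
  then have "fibM p k (Vv (Suc n) l) = (\<Sum>a<p. half p * p^(n - 1) + (p - 1) * T a)"
    using fibM_Vv_rec[OF assms(1-3) _ Suc.prems] Suc.hyps by simp
  also have "\<dots> = half p * p^n + (p - 1) * (\<Sum>a<p. T a)"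
    using Suc.hyps by (simp add: sum.distrib sum_distrib_left power_eq_if)
  also have "(\<Sum>a<p. T a) = (\<Sum>U<p^n. coded_des p k (Suc n) (U * p^k + l))"
    unfolding T_def using sum_coded_des_Suc[OF p(2) Suc.hyps Suc.prems] by simp
  finally show ?case by simp
qed

section \<open>A closed form for the vertices V_{k+2,l}\<close>

lemma window_shifted:
  assumes "0 < p" "j \<le> k" "l < p^k"
  shows "window p k (U * p^k + l) j = (U mod p^(j+1)) * p^(k-j) + l div p^j"
proof -
  have Pk: "p^k = p^(k-j) * p^j" using assms(2) by (simp flip: power_add)
  have c: "l div p^j < p^(k-j)" using assms Pk by (simp add: div_less_iff_less_mult)
  have d: "(U * p^k + l) div p^j = U * p^(k-j) + l div p^j" unfolding Pk using assms(1)
    by (simp add: mult.assoc[symmetric])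
  have e: "p^(k+1) = p^(k-j) * p^(j+1)" using assms(2) by (simp flip: power_add)
  show ?thesis
    unfolding window_def d e mod_mult2_eq using c assms(1) by (simp add: mult.commute)
qed

lemma digit_shifted:
  assumes "0 < p" "l < p^k"
  shows "digit p (U * p^k + l) (j + k + 1) = digit p U (j + 1)"
proof -
  have "p^(j + k + 1) = p^k * p^(j + 1)" by (simp add: ac_simps flip: power_add)
  then have "(U * p^k + l) div p^(j + k + 1) = (U * p^k + l) div p^k div p^(j + 1)"
    by (simp only: div_mult2_eq)
  also have "(U * p^k + l) div p^k = U" using assms by simp
  finally show ?thesis by (simp add: digit_def)
qed

lemma sum_window_below_half:
  assumes "odd p" "3 \<le> p" "j \<le> k" "l < p^k"
  shows "(\<Sum>U<p^(k+1). of_bool (window p k (U * p^k + l) j < half p * repunit p (k+1)))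
    = p^(k-j) * (half p * repunit p (j+1) + of_bool (l div p^j < half p * repunit p (k-j)))"
proof -
  have p: "0 < p" using assms by simp
  define c where "c = l div p^j"
  define Q where "Q = p^(k-j)"
  have "p^k = Q * p^j" unfolding Q_def using assms(3) by (simp flip: power_add)
  then have cQ: "c < Q" unfolding c_def using assms p by (simp add: div_less_iff_less_mult)
  have e: "p^(k+1) = Q * p^(j+1)" unfolding Q_def using assms(3) by (simp flip: power_add)
  have R: "half p * repunit p (k+1) = (half p * repunit p (j+1)) * Q + half p * repunit p (k-j)"
    using repunit_add[of p "j+1" "k-j"] assms(3) unfolding Q_def by (simp add: algebra_simps)
  have "(\<Sum>U<p^(k+1). of_bool (window p k (U * p^k + l) j < half p * repunit p (k+1)))
      = (\<Sum>U<p^(k+1). of_bool ((U mod p^(j+1)) * Q + c < half p * repunit p (k+1)))"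
    unfolding c_def Q_def using window_shifted[OF p assms(3,4)] by simp
  also have "\<dots> = Q * (\<Sum>a<p^(j+1). of_bool (a * Q + c < (half p * repunit p (j+1)) * Q + half p * repunit p (k-j)))"
    unfolding e R by (rule sum_lessThan_mult_mod)
  also have "(\<Sum>a<p^(j+1). of_bool (a * Q + c < (half p * repunit p (j+1)) * Q + half p * repunit p (k-j)))
      = half p * repunit p (j+1) + of_bool (c < half p * repunit p (k-j))"
    using mult_repunit_less[OF p half_le, of "j+1"] mult_repunit_less[OF p half_le, of "k-j"] cQ
    unfolding Q_def by (intro sum_of_bool_lex_less) auto
  finally show ?thesis unfolding c_def Q_def .
qed

definition repunit_rank :: "nat \<Rightarrow> nat \<Rightarrow> nat \<Rightarrow> nat" where
  "repunit_rank p g c = (\<Sum>e<p. of_bool (e * repunit p g < c))"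

lemma repunit_rank_reflect: "(\<Sum>a<p. of_bool ((p - 1 - a) * repunit p g < c)) = repunit_rank p g c"
  unfolding repunit_rank_def by (rule sum.reindex_bij_witness[of _ "\<lambda>e. p - 1 - e" "\<lambda>e. p - 1 - e"]) auto

lemma sum_of_bool_block:
  assumes "0 < p" "a < p" "j < k" "c < p^(k-j)"
  shows "(\<Sum>b<p^(j+1). of_bool ((p - 1 - a) * repunit p (k+1) < b * p^(k-j) + c))
    = a * repunit p (j+1) + of_bool ((p - 1 - a) * repunit p (k-j) < c)"
proof -
  define e where "e = p - 1 - a"
  have "e * repunit p (k+1) = (e * repunit p (j+1)) * p^(k-j) + e * repunit p (k-j)"
    using repunit_add[of p "j+1" "k-j"] assms(3) by (simp add: algebra_simps)
  then have "(\<Sum>b<p^(j+1). of_bool (e * repunit p (k+1) < b * p^(k-j) + c))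
      = (p^(j+1) - 1 - e * repunit p (j+1)) + of_bool (e * repunit p (k-j) < c)"
    using mult_repunit_less[OF assms(1), of e "j+1"] mult_repunit_less[OF assms(1), of e "k-j"] assms(4)
    unfolding e_def by (simp only:) (intro sum_of_bool_lex_greater; simp)
  moreover have "p^(j+1) - 1 - e * repunit p (j+1) = a * repunit p (j+1)"
  proof -
    have "(a + e) * repunit p (j+1) + 1 = p^(j+1)"
      using repunit_geometric[OF assms(1), of "j+1"] assms(2) unfolding e_def by simp
    then show ?thesis by (simp add: add_mult_distrib)
  qed
  ultimately show ?thesis unfolding e_def by (simp only:)
qed

lemma sum_window_above_digit:
  assumes "odd p" "3 \<le> p" "j < k" "l < p^k"
  shows "(\<Sum>U<p^(k+1). of_bool ((p - 1 - digit p (U * p^k + l) (j+k+1)) * repunit p (k+1)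
        < window p k (U * p^k + l) j))
    = p^(k-j-1) * (p * half p * repunit p (j+1) + repunit_rank p (k-j) (l div p^j))"
proof -
  have p: "0 < p" using assms by simp
  define c where "c = l div p^j"
  define Q where "Q = p^(k-j)"
  define M where "M = p^(j+1)"
  have "p^k = Q * p^j" unfolding Q_def using assms(3) by (simp flip: power_add)
  then have cQ: "c < Q" unfolding c_def using assms p by (simp add: div_less_iff_less_mult)
  define g :: "nat \<Rightarrow> nat" where "g b = of_bool ((p - 1 - b div M) * repunit p (k+1) < (b mod M) * Q + c)" for b
  have e: "p^(k+1) = p^(k-j-1) * (p * M)" unfolding M_def using assms(3)
    by (simp flip: power_add power_Suc add: Suc_diff_Suc)
  have gU: "of_bool ((p - 1 - digit p (U * p^k + l) (j+k+1)) * repunit p (k+1) < window p k (U * p^k + l) j)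
      = g (U mod (p * M))" for U
  proof -
    have "U mod (M * p) = M * (U div M mod p) + U mod M" by (rule mod_mult2_eq)
    moreover have "0 < M" unfolding M_def using p by simp
    ultimately have "(U mod (p * M)) div M = digit p U (j+1)" "(U mod (p * M)) mod M = U mod M"
      by (simp_all add: mult.commute digit_def M_def)
    then show ?thesis
      unfolding g_def digit_shifted[OF p assms(4)] window_shifted[OF p less_imp_le[OF assms(3)] assms(4)]
      by (simp add: M_def Q_def c_def)
  qed
  have "(\<Sum>U<p^(k+1). of_bool ((p - 1 - digit p (U * p^k + l) (j+k+1)) * repunit p (k+1)
        < window p k (U * p^k + l) j)) = p^(k-j-1) * (\<Sum>b<p * M. g b)"
    unfolding gU e by (rule sum_lessThan_mult_mod)
  also have "(\<Sum>b<p * M. g b) = (\<Sum>a<p. \<Sum>b<M. g (a * M + b))" by (rule sum_lessThan_mult)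
  also have "\<dots> = (\<Sum>a<p. a * repunit p (j+1) + of_bool ((p - 1 - a) * repunit p (k-j) < c))"
  proof (rule sum.cong[OF refl])
    fix a assume "a \<in> {..<p}"
    then have "(\<Sum>b<M. g (a * M + b)) = (\<Sum>b<M. of_bool ((p - 1 - a) * repunit p (k+1) < b * Q + c))"
      unfolding g_def by (intro sum.cong) auto
    with sum_of_bool_block[OF p _ assms(3) cQ[unfolded Q_def]] \<open>a \<in> {..<p}\<close>
    show "(\<Sum>b<M. g (a * M + b)) = a * repunit p (j+1) + of_bool ((p - 1 - a) * repunit p (k-j) < c)"
      unfolding M_def Q_def by simp
  qed
  also have "\<dots> = p * half p * repunit p (j+1) + repunit_rank p (k-j) c"
    using sum_lessThan_odd[OF assms(1)] repunit_rank_reflect[of p "k-j" c]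
    by (simp add: sum.distrib flip: sum_distrib_right)
  finally show ?thesis unfolding c_def .
qed

definition half_weight :: "nat \<Rightarrow> nat \<Rightarrow> nat \<Rightarrow> nat" where
  "half_weight p k l = (\<Sum>j<k+1. p^(k-j) * of_bool (l div p^j < half p * repunit p (k-j)))"

definition rank_weight :: "nat \<Rightarrow> nat \<Rightarrow> nat \<Rightarrow> nat" where
  "rank_weight p k l = (\<Sum>j<k. p^(k-j-1) * repunit_rank p (k-j) (l div p^j))"

lemma fibM_Vk2_sums:
  assumes "odd p" "3 \<le> p" "1 \<le> k" "l < p^k"
  shows "fibM p k (Vv (k+2) l) = half p * p^(k+1) + (p - 1) *
    (half p * (\<Sum>j<k+1. p^(k-j) * repunit p (j+1)) + half_weight p k l
     + half p * (\<Sum>j<k. p^(k-j) * repunit p (j+1)) + rank_weight p k l)"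
proof -
  have "(\<Sum>U<p^(k+1). coded_des p k (k+2) (U * p^k + l))
     = (\<Sum>j<k+1. \<Sum>U<p^(k+1). of_bool (window p k (U * p^k + l) j < half p * repunit p (k+1)))
     + (\<Sum>j<k. \<Sum>U<p^(k+1). of_bool ((p - 1 - digit p (U * p^k + l) (j+k+1)) * repunit p (k+1)
          < window p k (U * p^k + l) j))"
  proof -
    have "k + 2 - 1 = k + 1" "k + 2 - 2 = k" by simp_all
    then show ?thesis
      unfolding coded_des_def sum.distrib by (simp only:) (rule arg_cong2[where f = "(+)"]; rule sum.swap)
  qed
  also have "\<dots> = (\<Sum>j<k+1. p^(k-j) * (half p * repunit p (j+1)
        + of_bool (l div p^j < half p * repunit p (k-j))))
      + (\<Sum>j<k. p^(k-j-1) * (p * half p * repunit p (j+1) + repunit_rank p (k-j) (l div p^j)))"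
    using sum_window_below_half[OF assms(1,2) _ assms(4)] sum_window_above_digit[OF assms(1,2) _ assms(4)]
    by simp
  also have "\<dots> = half p * (\<Sum>j<k+1. p^(k-j) * repunit p (j+1)) + half_weight p k l
     + half p * (\<Sum>j<k. p^(k-j) * repunit p (j+1)) + rank_weight p k l"
  proof -
    have "p^(k-j-1) * (p * half p * repunit p (j+1) + y) = half p * (p^(k-j) * repunit p (j+1)) + p^(k-j-1) * y"
      if "j < k" for j y
    proof -
      have "k - j = Suc (k - j - 1)" using that by simp
      then have "p^(k-j) = p * p^(k-j-1)" by (metis power_Suc)
      then show ?thesis by (simp add: algebra_simps)
    qed
    then have "(\<Sum>j<k. p^(k-j-1) * (p * half p * repunit p (j+1) + repunit_rank p (k-j) (l div p^j)))
        = half p * (\<Sum>j<k. p^(k-j) * repunit p (j+1)) + rank_weight p k l"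
      by (simp add: rank_weight_def sum.distrib sum_distrib_left)
    moreover have "(\<Sum>j<k+1. p^(k-j) * (half p * repunit p (j+1) + of_bool (l div p^j < half p * repunit p (k-j))))
        = half p * (\<Sum>j<k+1. p^(k-j) * repunit p (j+1)) + half_weight p k l"
      by (simp add: half_weight_def sum.distrib sum_distrib_left algebra_simps)
    ultimately show ?thesis by simp
  qed
  finally show ?thesis
    using fibM_Vv_coded[OF assms(1-3) _ assms(4), of "k+2"] by simp
qed

lemma sum_pow_mult_repunit:
  assumes "0 < p"
  shows "(p - 1) * (\<Sum>j<n. p^(n-1-j) * repunit p (j+1)) + repunit p n = n * p^n"
proof -
  have "repunit p n = (\<Sum>j<n. p^(n-1-j))"
    unfolding repunit_def using sum.nat_diff_reindex[of "\<lambda>i. p^i" n] by simp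
  then have "(p - 1) * (\<Sum>j<n. p^(n-1-j) * repunit p (j+1)) + repunit p n
      = (\<Sum>j<n. p^(n-1-j) * ((p - 1) * repunit p (j+1) + 1))"
    by (simp add: sum_distrib_left sum.distrib algebra_simps)
  also have "\<dots> = (\<Sum>j<n. p^n)"
  proof (rule sum.cong[OF refl])
    fix j assume "j \<in> {..<n}"
    then have "n - 1 - j + (j + 1) = n" by simp
    then show "p^(n-1-j) * ((p - 1) * repunit p (j+1) + 1) = p^n"
      by (metis repunit_geometric[OF assms] power_add)
  qed
  finally show ?thesis by simp
qed

lemma fibM_Vk2_formula:
  assumes "odd p" "3 \<le> p" "1 \<le> k" "l < p^k"
  shows "int (fibM p k (Vv (k+2) l)) = int (half p) * (2 * (int k + 1) * int p^(k+1) + 1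
    - 2 * int (repunit p (k+1)) + 2 * int (half_weight p k l) + 2 * int (rank_weight p k l))"
proof -
  define S1 where "S1 = (\<Sum>j<k+1. p^(k-j) * repunit p (j+1))"
  define S2 where "S2 = (\<Sum>j<k. p^(k-j) * repunit p (j+1))"
  have p: "0 < p" using assms(2) by simp
  have S1: "(p - 1) * S1 + repunit p (k+1) = (k + 1) * p^(k+1)"
    using sum_pow_mult_repunit[OF p, of "k+1"] unfolding S1_def by simp
  have S2: "S2 + repunit p (k+1) = S1" unfolding S1_def S2_def by simp
  have G: "(p - 1) * repunit p (k+1) + 1 = p^(k+1)" using repunit_geometric[OF p] .
  have h: "p - 1 = 2 * half p" using two_half[OF assms(1)] by simp
  have "fibM p k (Vv (k+2) l) = half p * p^(k+1)
      + 2 * half p * (half p * S1 + half_weight p k l + half p * S2 + rank_weight p k l)"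
    unfolding S1_def S2_def h[symmetric] using fibM_Vk2_sums[OF assms] .
  then have "int (fibM p k (Vv (k+2) l)) = int (half p) * int p^(k+1)
      + 2 * int (half p) * (int (half p) * int S1 + int (half_weight p k l) + int (half p) * int S2
        + int (rank_weight p k l))"
    by simp
  moreover have "2 * int (half p) * int S1 + int (repunit p (k+1)) = (int k + 1) * int p^(k+1)"
    using arg_cong[OF S1, of int] unfolding h by (simp add: algebra_simps)
  moreover have "int S2 + int (repunit p (k+1)) = int S1"
    using arg_cong[OF S2, of int] by simp
  moreover have "2 * int (half p) * int (repunit p (k+1)) + 1 = int p^(k+1)"
    using arg_cong[OF G, of int] unfolding h by simp
  moreover have "F = H * (2 * (K + 1) * Q + 1 - 2 * R + 2 * X + 2 * Y)"
    if "F = H * Q + 2 * H * (H * S1 + X + H * S2 + Y)" "2 * H * S1 + R = (K + 1) * Q"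
      "S2 + R = S1" "2 * H * R + 1 = Q"
    for F H Q S1 S2 X Y R K :: int
    using that by algebra
  ultimately show ?thesis by blast
qed

section \<open>The weights on the ranges (a)-(e)\<close>

lemma repunit_rank_eq:
  assumes "1 \<le> t" "t \<le> p" "(t - 1) * repunit p g < c" "c \<le> t * repunit p g"
  shows "repunit_rank p g c = t"
proof -
  have "e * repunit p g < c \<longleftrightarrow> e < t" for e
  proof
    assume "e * repunit p g < c"
    show "e < t"
    proof (rule ccontr)
      assume "\<not> e < t"
      then have "t * repunit p g \<le> e * repunit p g" by (simp add: mult_le_mono1)
      with \<open>e * repunit p g < c\<close> assms(4) show False by linarith
    qed
  next
    assume "e < t"
    then have "e * repunit p g \<le> (t - 1) * repunit p g" by (intro mult_right_mono) auto
    then show "e * repunit p g < c" using assms(3) by linarith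
  qed
  then show ?thesis using assms(2) by (simp add: repunit_rank_def sum_of_bool_less)
qed

lemma repunit_rank_mult:
  assumes "0 < g" "0 < p" "t \<le> p"
  shows "repunit_rank p g (t * repunit p g) = t"
proof (cases "t = 0")
  case False
  then show ?thesis
    using assms repunit_pos[OF assms(1,2)] by (intro repunit_rank_eq) auto
qed (simp add: repunit_rank_def)

lemma sum_pow_of_bool_less:
  assumes "m \<le> k + 1"
  shows "(\<Sum>j<k+1. p^(k-j) * of_bool (j < m)) = p^(k+1-m) * repunit p m"
  using assms
proof (induction m)
  case (Suc m)
  have "(\<Sum>j<k+1. p^(k-j) * of_bool (j < Suc m)) = (\<Sum>j<k+1. p^(k-j) * of_bool (j < m) + of_bool (j = m) * p^(k-m))"
    by (intro sum.cong) auto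
  also have "\<dots> = p^(k+1-m) * repunit p m + p^(k-m)"
    using Suc by (simp add: sum.distrib)
  also have "\<dots> = p^(k+1 - Suc m) * repunit p (Suc m)"
    using Suc.prems by (simp add: Suc_diff_le repunit_Suc_left algebra_simps)
  finally show ?case .
qed simp

lemma half_weight_eq:
  assumes "\<And>j. j < k \<Longrightarrow> l div p^j < half p * repunit p (k-j) \<longleftrightarrow> j < m" "m \<le> k"
  shows "half_weight p k l = p^(k+1-m) * repunit p m"
proof -
  have "half_weight p k l = (\<Sum>j<k+1. p^(k-j) * of_bool (j < m))"
    unfolding half_weight_def using assms by (intro sum.cong) (auto simp: less_Suc_eq)
  also have "\<dots> = p^(k+1-m) * repunit p m" using assms(2) by (intro sum_pow_of_bool_less) simp
  finally show ?thesis .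
qed

lemma rank_weight_const:
  assumes "\<And>j. j < k \<Longrightarrow> repunit_rank p (k-j) (l div p^j) = t"
  shows "rank_weight p k l = t * repunit p k"
proof -
  have "rank_weight p k l = (\<Sum>j<k. t * p^(k-j-1))"
    unfolding rank_weight_def using assms by (intro sum.cong) auto
  also have "\<dots> = t * repunit p k" by (simp only: sum_distrib_left[symmetric] sum_pow_diff)
  finally show ?thesis .
qed

lemma weights_case_a:
  assumes "odd p" "3 \<le> p"
  shows "half_weight p k 0 = p * repunit p k" "rank_weight p k 0 = 0"
proof -
  have "0 < half p * repunit p (k-j)" if "j < k" for j
    using that assms half_pos repunit_pos by simp
  then show "half_weight p k 0 = p * repunit p k"
    using half_weight_eq[of k 0 p k] by simp
  show "rank_weight p k 0 = 0"
    using rank_weight_const[of k p 0 0] by (simp add: repunit_rank_def)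
qed

lemma weights_case_e:
  assumes "odd p" "3 \<le> p"
  shows "half_weight p k (half p * repunit p k) = 0" "rank_weight p k (half p * repunit p k) = half p * repunit p k"
proof -
  have p: "0 < p" using assms by simp
  have div: "half p * repunit p k div p^j = half p * repunit p (k-j)" if "j \<le> k" for j
    using mult_repunit_div[OF p half_le, of "k-j" j] that by simp
  show "half_weight p k (half p * repunit p k) = 0"
    using half_weight_eq[of k "half p * repunit p k" p 0] div by simp
  show "rank_weight p k (half p * repunit p k) = half p * repunit p k"
    using div repunit_rank_mult[OF _ p, of _ "half p"] by (intro rank_weight_const) (simp add: half_def)
qed

lemma div_pow_bounds:
  assumes "0 < p" "t \<le> p - 1" "j < k" "t * p^(k-1) \<le> l" "l \<le> t * repunit p k"
  shows "t * p^(k-j-1) \<le> l div p^j" "l div p^j \<le> t * repunit p (k-j)"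
proof -
  have "t * p^(k-1) = t * p^(k-j-1) * p^j" using assms(3) by (simp add: mult.assoc flip: power_add)
  then have "t * p^(k-j-1) * p^j div p^j \<le> l div p^j" using assms(4) div_le_mono by metis
  then show "t * p^(k-j-1) \<le> l div p^j" using assms(1) by simp
  have "t * repunit p k div p^j = t * repunit p (k-j)"
    using mult_repunit_div[OF assms(1,2), of "k-j" j] assms(3) by simp
  then show "l div p^j \<le> t * repunit p (k-j)" using div_le_mono[OF assms(5), of "p^j"] by simp
qed

lemma weights_case_c:
  assumes "odd p" "3 \<le> p" "1 \<le> t" "t \<le> p - 1" "t \<noteq> half p"
    "t * p^(k-1) \<le> l" "l \<le> t * repunit p k"
  shows "half_weight p k l = (if t < half p then p * repunit p k else 0)" "rank_weight p k l = t * repunit p k"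
proof -
  have p: "0 < p" using assms by simp
  note between = div_pow_bounds[OF p assms(4) _ assms(6,7)]
  have gap: "(t - 1) * repunit p (k-j) < t * p^(k-j-1)" if "j < k" for j
    using pred_mult_repunit_less[OF assms(3), of p "k-j"] assms(4) that by simp
  show "rank_weight p k l = t * repunit p k"
    using between gap assms(3,4) by (intro rank_weight_const repunit_rank_eq) (force+)
  have "l div p^j < half p * repunit p (k-j) \<longleftrightarrow> j < (if t < half p then k else 0)" if "j < k" for j
  proof (cases "t < half p")
    case True
    then have lt: "t * repunit p (k-j) < half p * repunit p (k-j)" using that p repunit_pos by simp
    show ?thesis using True le_less_trans[OF between(2)[OF that] lt] that by simp
  next
    case False
    then have le: "half p * repunit p (k-j) \<le> (t - 1) * repunit p (k-j)"
      using assms(5) by (intro mult_right_mono) auto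
    have "\<not> l div p^j < half p * repunit p (k-j)" using le between(1)[OF that] gap[OF that] by linarith
    with False show ?thesis by simp
  qed
  from half_weight_eq[OF this] show "half_weight p k l = (if t < half p then p * repunit p k else 0)"
    by (cases "t < half p") simp_all
qed

lemma div_pow_case_d:
  assumes "odd p" "3 \<le> p" "1 \<le> i" "i < k"
    "half p * (p^i * repunit p (k-i)) \<le> l" "l < half p * (p^(i-1) * repunit p (k-i+1))"
  shows "i \<le> j \<Longrightarrow> j \<le> k \<Longrightarrow> l div p^j = half p * repunit p (k-j)"
    and "j < i \<Longrightarrow> (half p - 1) * repunit p (k-j) < l div p^j \<and> l div p^j < half p * repunit p (k-j)"
proof -
  have p: "0 < p" using assms by simp
  have h: "1 \<le> half p" using half_pos[OF assms(1,2)] by simp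
  define A where "A = half p * repunit p (k-i)"
  have RA: "1 \<le> repunit p (k-i)" using repunit_pos[of "k-i" p] assms(4) p by simp
  have pi: "p^i = p * p^(i-1)" using assms(3) by (cases i) auto
  have lo: "A * p^i \<le> l" using assms(5) unfolding A_def by (simp add: algebra_simps)
  have hi: "l < A * p^i + half p * p^(i-1)"
    using assms(6) repunit_Suc_left[of p "k-i"] pi unfolding A_def by (simp add: algebra_simps)
  have "half p * p^(i-1) \<le> p^i" unfolding pi using half_le[of p] by (intro mult_right_mono) auto
  then have ldiv: "l div p^i = A" using lo hi by (intro div_nat_eqI) (simp_all add: algebra_simps)
  show "l div p^j = half p * repunit p (k-j)" if "i \<le> j" "j \<le> k"
  proof -
    have "p^j = p^i * p^(j-i)" using that by (simp flip: power_add)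
    then have "l div p^j = A div p^(j-i)" using ldiv by (simp add: div_mult2_eq)
    also have "\<dots> = half p * repunit p (k-j)"
      unfolding A_def using mult_repunit_div[OF p half_le, of "k-j" "j-i"] that by simp
    finally show ?thesis .
  qed
  show "(half p - 1) * repunit p (k-j) < l div p^j \<and> l div p^j < half p * repunit p (k-j)" if "j < i"
  proof -
    define m where "m = i - j"
    have m: "1 \<le> m" unfolding m_def using that by simp
    have pj: "p^i = p^m * p^j" "p^(i-1) = p^(m-1) * p^j" unfolding m_def using that by (simp_all flip: power_add)
    have Rk: "repunit p (k-j) = repunit p (k-i) * p^m + repunit p m"
      using repunit_add[of p "k-i" m] assms(4) that unfolding m_def by simp
    have c1: "A * p^m \<le> l div p^j"
      using div_le_mono[OF lo, of "p^j"] p pj by (simp add: mult.assoc)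
    have c2: "l div p^j < A * p^m + half p * p^(m-1)"
      using hi pj by (intro less_mult_imp_div_less) (simp add: algebra_simps)
    have e1: "half p * repunit p (k-j) = A * p^m + half p * repunit p m"
      unfolding A_def Rk by (simp add: algebra_simps)
    have e2: "half p * p^(m-1) \<le> half p * repunit p m" using repunit_ge_pow[OF m] by simp
    have e3: "(half p - 1) * repunit p m < p^m" using mult_repunit_less[OF p, of "half p - 1" m] half_le[of p] by simp
    have "(half p - 1) * repunit p (k-j) = ((half p - 1) * repunit p (k-i)) * p^m + (half p - 1) * repunit p m"
      unfolding Rk by (simp add: algebra_simps)
    also have "\<dots> < ((half p - 1) * repunit p (k-i) + 1) * p^m" using e3 by (simp add: algebra_simps)
    also have "\<dots> \<le> A * p^m"
      using h RA unfolding A_def by (intro mult_right_mono) (cases "half p", simp_all)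
    finally show ?thesis using c1 c2 e1 e2 by linarith
  qed
qed

lemma weights_case_d:
  assumes "odd p" "3 \<le> p" "1 \<le> i" "i < k"
    "half p * (p^i * repunit p (k-i)) \<le> l" "l < half p * (p^(i-1) * repunit p (k-i+1))"
  shows "half_weight p k l = p^(k+1-i) * repunit p i" "rank_weight p k l = half p * repunit p k"
proof -
  have p: "0 < p" using assms by simp
  have h: "1 \<le> half p" using half_pos[OF assms(1,2)] by simp
  note high = div_pow_case_d(1)[OF assms] and low = div_pow_case_d(2)[OF assms]
  show "half_weight p k l = p^(k+1-i) * repunit p i"
  proof (rule half_weight_eq)
    fix j assume "j < k"
    then show "l div p^j < half p * repunit p (k-j) \<longleftrightarrow> j < i"
      using low high by (cases "j < i") auto
  qed (use assms in simp)
  show "rank_weight p k l = half p * repunit p k"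
  proof (rule rank_weight_const)
    fix j assume "j < k"
    show "repunit_rank p (k-j) (l div p^j) = half p"
    proof (cases "j < i")
      case True
      then show ?thesis
        using low[OF True] by (intro repunit_rank_eq[OF h]) (simp_all add: half_def)
    next
      case False
      then show ?thesis
        using high[of j] \<open>j < k\<close> repunit_rank_mult[OF _ p, of "k-j" "half p"] by (simp add: half_def)
    qed
  qed
qed

lemma sum_pow_of_bool_greater:
  assumes "i < k"
  shows "(\<Sum>j<k. p^(k-j-1) * of_bool (i < j)) = repunit p (k-1-i)"
proof -
  have "(\<Sum>j<k. p^(k-j-1) * of_bool (i < j)) = (\<Sum>j<k. (\<lambda>e. p^e * of_bool (e < k-1-i)) (k - Suc j))"
    by (intro sum.cong) auto
  also have "\<dots> = (\<Sum>e<k. p^e * of_bool (e < k-1-i))" by (rule sum.nat_diff_reindex)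
  also have "\<dots> = (\<Sum>e<k-1-i. p^e)"
    by (intro sum.mono_neutral_cong_right) auto
  finally show ?thesis by (simp add: repunit_def)
qed

lemma div_pow_case_b:
  assumes "odd p" "3 \<le> p" "i + 2 \<le> k" "1 \<le> t" "t \<le> p - 1"
    "(t - 1) * (p^i * repunit p (k-i)) + p^i \<le> l" "l < (t - 1) * (p^(i+1) * repunit p (k-i-1)) + p^(i+1)"
  shows "i < j \<Longrightarrow> j < k \<Longrightarrow> l div p^j = (t - 1) * repunit p (k-j)"
    and "j \<le> i \<Longrightarrow> (t - 1) * repunit p (k-j) < l div p^j \<and> l div p^j < t * repunit p (k-j)"
proof -
  have p: "0 < p" using assms by simp
  define R' where "R' = repunit p (k-i-1)"
  define Z where "Z = (t - 1) * R'"
  have R'1: "1 \<le> R'" unfolding R'_def using repunit_pos[of "k-i-1" p] assms(3) p by simp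
  have Rki: "repunit p (k-i) = p * R' + 1"
    unfolding R'_def using repunit_Suc_left[of p "k-i-1"] assms(3) by (simp add: Suc_diff_Suc)
  have lo: "Z * p^(i+1) + t * p^i \<le> l"
  proof -
    have "(t - 1) * (p^i * repunit p (k-i)) + p^i = Z * p^(i+1) + ((t - 1) + 1) * p^i"
      unfolding Rki Z_def by (simp add: algebra_simps)
    then show ?thesis using assms(4,6) by simp
  qed
  have hi: "l < (Z + 1) * p^(i+1)" using assms(7) unfolding Z_def R'_def by (simp add: algebra_simps)
  have ldiv: "l div p^(i+1) = Z"
    using lo hi by (intro div_nat_eqI) (simp_all add: algebra_simps)
  show "l div p^j = (t - 1) * repunit p (k-j)" if "i < j" "j < k"
  proof -
    have "i + 1 + (j - i - 1) = j" using that by simp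
    then have "p^j = p^(i+1) * p^(j-i-1)" by (metis power_add)
    then have "l div p^j = Z div p^(j-i-1)" using ldiv by (simp add: div_mult2_eq)
    also have "\<dots> = (t - 1) * repunit p (k-j)"
      unfolding Z_def R'_def using mult_repunit_div[OF p, of "t - 1" "k-j" "j-i-1"] assms(5) that by simp
    finally show ?thesis .
  qed
  show "(t - 1) * repunit p (k-j) < l div p^j \<and> l div p^j < t * repunit p (k-j)" if "j \<le> i"
  proof -
    define m where "m = i - j"
    have pj: "p^i = p^m * p^j" "p^(i+1) = p^(m+1) * p^j" unfolding m_def using that by (simp_all flip: power_add)
    have Rk1: "repunit p (k-j) = repunit p (k-i) * p^m + repunit p m"
      using repunit_add[of p "k-i" m] assms(3) that unfolding m_def by simp
    have "(k-i-1) + (m+1) = k - j" unfolding m_def using that assms(3) by simp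
    then have Rk2: "repunit p (k-j) = R' * p^(m+1) + repunit p (m+1)"
      using repunit_add[of p "k-i-1" "m+1"] unfolding R'_def by simp
    have c1: "((t - 1) * repunit p (k-i) + 1) * p^m \<le> l div p^j"
    proof -
      have "((t - 1) * repunit p (k-i) + 1) * p^m * p^j \<le> l" using assms(6) pj by (simp add: algebra_simps)
      from div_le_mono[OF this, of "p^j"] show ?thesis using p by simp
    qed
    have c2: "l div p^j < (Z + 1) * p^(m+1)"
      using hi pj by (intro less_mult_imp_div_less) (simp add: algebra_simps)
    have e1: "(t - 1) * repunit p (k-j) < ((t - 1) * repunit p (k-i) + 1) * p^m"
      using mult_repunit_less[OF p, of "t - 1" m] assms(5) unfolding Rk1 by (simp add: algebra_simps)
    have "(Z + 1) * p^(m+1) \<le> (Z + R') * p^(m+1)" using R'1 by (intro mult_right_mono) auto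
    also have "Z + R' = t * R'" unfolding Z_def using assms(4) by (cases t) auto
    also have "t * R' * p^(m+1) \<le> t * repunit p (k-j)" unfolding Rk2 by (simp add: algebra_simps)
    finally show ?thesis using c1 c2 e1 by linarith
  qed
qed

lemma weights_case_b:
  assumes "odd p" "3 \<le> p" "i + 2 \<le> k" "1 \<le> t" "t \<le> p - 1"
    "(t - 1) * (p^i * repunit p (k-i)) + p^i \<le> l" "l < (t - 1) * (p^(i+1) * repunit p (k-i-1)) + p^(i+1)"
  shows "half_weight p k l = (if t \<le> half p then p * repunit p k else 0)"
    "rank_weight p k l + repunit p (k-1-i) = t * repunit p k"
proof -
  have p: "0 < p" using assms by simp
  note high = div_pow_case_b(1)[OF assms] and low = div_pow_case_b(2)[OF assms]
  show "half_weight p k l = (if t \<le> half p then p * repunit p k else 0)"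
  proof -
    have "l div p^j < half p * repunit p (k-j) \<longleftrightarrow> j < (if t \<le> half p then k else 0)" if "j < k" for j
    proof (cases "j \<le> i")
      case True
      note low = low[OF True]
      show ?thesis
      proof (cases "t \<le> half p")
        case le: True
        then have "t * repunit p (k-j) \<le> half p * repunit p (k-j)" by (rule mult_right_mono) simp
        then have "l div p^j < half p * repunit p (k-j)" using low by linarith
        with le that show ?thesis by simp
      next
        case gt: False
        then have "half p * repunit p (k-j) \<le> (t - 1) * repunit p (k-j)" by (intro mult_right_mono) auto
        then have "\<not> l div p^j < half p * repunit p (k-j)" using low by linarith
        with gt show ?thesis by simp
      qed
    next
      case False
      then show ?thesis
        using high[of j] that repunit_pos[of "k-j" p] p assms(4) by auto
    qed
    from half_weight_eq[OF this] show ?thesis by (cases "t \<le> half p") simp_all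
  qed
  have "repunit_rank p (k-j) (l div p^j) = t - of_bool (i < j)" if "j < k" for j
  proof (cases "i < j")
    case True
    then show ?thesis
      using high[OF True that] repunit_rank_mult[OF _ p, of "k-j" "t - 1"] that assms(5) by simp
  next
    case False
    then show ?thesis
      using low[of j] assms(4,5) by (simp add: repunit_rank_eq)
  qed
  then have "rank_weight p k l + (\<Sum>j<k. p^(k-j-1) * of_bool (i < j)) = (\<Sum>j<k. t * p^(k-j-1))"
    unfolding rank_weight_def sum.distrib[symmetric] using assms(4)
    by (intro sum.cong) (auto simp: algebra_simps)
  then show "rank_weight p k l + repunit p (k-1-i) = t * repunit p k"
    using assms(3) by (simp only: sum_pow_of_bool_greater sum_distrib_left[symmetric] sum_pow_diff)
qed

section \<open>Integer form of the five cases\<close>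

lemma sum_power_int_interval: "(\<Sum>x\<in>{a..b}. int p ^ x) = int (p^a * repunit p (Suc b - a))"
proof (cases "a \<le> b")
  case True
  have "(\<Sum>x\<in>{a..b}. int p ^ x) = (\<Sum>i\<in>{0..<Suc b - a}. int p ^ (i + a))"
    using sum.shift_bounds_nat_ivl[of "\<lambda>x. int p ^ x" 0 a "Suc b - a"] True
    by (simp add: atLeastLessThanSuc_atLeastAtMost)
  then show ?thesis
    by (simp add: repunit_def power_add sum_distrib_left atLeast0LessThan algebra_simps)
qed simp

lemma sum_power_int_lower:
  "1 \<le> k \<Longrightarrow> (\<Sum>j\<in>{0..k-1}. int p ^ j) = int (repunit p k)"
  by (simp add: sum_power_int_interval)

lemma int_half: "0 < p \<Longrightarrow> (int p - 1) div 2 = int (half p)"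
  by (simp add: half_def zdiv_int of_nat_diff)

lemma fibM_Vk2_int:
  assumes "odd p" "3 \<le> p" "1 \<le> k" "l < p^k"
  defines "S \<equiv> (\<Sum>j\<in>{0..k-1}. int p ^ j)"
    and "C \<equiv> 2 * (int k + 1) * int p ^ (k + 1) - 1"
  shows "int (fibM p k (Vv (k + 2) l)) = (int p - 1) div 2
    * (C - 2 * int p * S + 2 * int (half_weight p k l) + 2 * int (rank_weight p k l))"
proof -
  have "S = int (repunit p k)" unfolding S_def sum_power_int_interval using assms(3) by simp
  moreover have "int (repunit p (k+1)) = int p * int (repunit p k) + 1"
    by (simp add: repunit_Suc_left)
  ultimately show ?thesis
    using fibM_Vk2_formula[OF assms(1-4)] int_half[of p] assms(2) unfolding C_def by simp
qed

lemma fibM_case_a: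
  assumes "odd p" "3 \<le> p" "1 \<le> k" "l = 0"
  defines "C \<equiv> 2 * (int k + 1) * int p ^ (k + 1) - 1"
    and "h \<equiv> (int p - 1) div 2"
  shows "int (fibM p k (Vv (k + 2) l)) = h * C"
proof -
  have "(\<Sum>j\<in>{0..k-1}. int p ^ j) = int (repunit p k)" using assms(3) by (rule sum_power_int_lower)
  then show ?thesis
    using fibM_Vk2_int[OF assms(1-3), of 0] weights_case_a[OF assms(1,2), of k] assms(2,4)
    unfolding C_def h_def by simp
qed

lemma fibM_case_b:
  assumes "odd p" "3 \<le> p" "2 \<le> k" "l < p^k" "i \<le> k - 2" "1 \<le> t" "t \<le> p - 1"
    "(int t - 1) * (\<Sum>\<iota>\<in>{i..k-1}. int p ^ \<iota>) + int p ^ i \<le> int l"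
    "int l \<le> (int t - 1) * (\<Sum>\<iota>\<in>{i+1..k-1}. int p ^ \<iota>) + int p ^ (i + 1) - 1"
  defines "M \<equiv> int (fibM p k (Vv (k + 2) l))"
    and "S \<equiv> (\<Sum>j\<in>{0..k-1}. int p ^ j)"
    and "C \<equiv> 2 * (int k + 1) * int p ^ (k + 1) - 1"
    and "h \<equiv> (int p - 1) div 2"
  shows "2 * int t \<le> int p - 1 \<Longrightarrow>
      M = h * (C + 2 * int t * S - 2 * (\<Sum>\<mu>\<in>{0..k-i-2}. int p ^ \<mu>))"
    and "int p + 1 \<le> 2 * int t \<Longrightarrow>
      M = h * (C + (2 * int t - 2 * int p) * S - 2 * (\<Sum>\<mu>\<in>{0..k-i-2}. int p ^ \<mu>))"
proof -
  have i: "i + 2 \<le> k" using assms(3,5) by simp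
  have t: "int t - 1 = int (t - 1)" using assms(6) by simp
  have lo: "(t - 1) * (p^i * repunit p (k-i)) + p^i \<le> l"
    using assms(8) i unfolding t sum_power_int_interval by (simp flip: of_nat_mult of_nat_add of_nat_power)
  have hi: "l < (t - 1) * (p^(i+1) * repunit p (k-i-1)) + p^(i+1)"
    using assms(9) i unfolding t sum_power_int_interval by (simp flip: of_nat_mult of_nat_add of_nat_power)
  note weights = weights_case_b[OF assms(1,2) i assms(6,7) lo hi]
  have S: "S = int (repunit p k)" unfolding S_def using assms(3) by (intro sum_power_int_lower) simp
  have R: "(\<Sum>\<mu>\<in>{0..k-i-2}. int p ^ \<mu>) = int (repunit p (k-1-i))"
    using i by (simp add: sum_power_int_interval Suc_diff_Suc numeral_2_eq_2)
  have rank: "int (rank_weight p k l) = int t * S - int (repunit p (k-1-i))"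
    using arg_cong[OF weights(2), of int] unfolding S by simp
  have M: "M = h * (C - 2 * int p * S + 2 * int (half_weight p k l) + 2 * int (rank_weight p k l))"
    using fibM_Vk2_int[OF assms(1,2) _ assms(4)] assms(3) unfolding M_def S_def C_def h_def by simp
  have half: "t \<le> half p \<longleftrightarrow> 2 * int t \<le> int p - 1"
    using two_half[OF assms(1)] assms(2) by linarith
  show "M = h * (C + 2 * int t * S - 2 * (\<Sum>\<mu>\<in>{0..k-i-2}. int p ^ \<mu>))" if "2 * int t \<le> int p - 1"
  proof -
    have "int (half_weight p k l) = int p * S" using weights(1) half that S by simp
    then show ?thesis unfolding M R rank by (simp add: algebra_simps)
  qed
  show "M = h * (C + (2 * int t - 2 * int p) * S - 2 * (\<Sum>\<mu>\<in>{0..k-i-2}. int p ^ \<mu>))"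
    if "int p + 1 \<le> 2 * int t"
  proof -
    have "int (half_weight p k l) = 0" using weights(1) half that by simp
    then show ?thesis unfolding M R rank by (simp add: algebra_simps)
  qed
qed

lemma fibM_case_c:
  assumes "odd p" "3 \<le> p" "1 \<le> k" "l < p^k" "1 \<le> t" "t \<le> p - 1" "2 * int t \<noteq> int p - 1"
    "int t * int p ^ (k - 1) \<le> int l" "int l \<le> int t * (\<Sum>j\<in>{0..k-1}. int p ^ j)"
  defines "M \<equiv> int (fibM p k (Vv (k + 2) l))"
    and "S \<equiv> (\<Sum>j\<in>{0..k-1}. int p ^ j)"
    and "C \<equiv> 2 * (int k + 1) * int p ^ (k + 1) - 1"
    and "h \<equiv> (int p - 1) div 2"
  shows "2 * int t \<le> int p - 3 \<Longrightarrow> M = h * (C + 2 * int t * S)"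
    and "int p + 1 \<le> 2 * int t \<Longrightarrow> M = h * (C + (2 * int t - 2 * int p) * S)"
proof -
  have S: "S = int (repunit p k)" unfolding S_def using assms(3) by (intro sum_power_int_lower) simp
  have two_half: "2 * int (half p) = int p - 1" using two_half[OF assms(1)] assms(2) by linarith
  have t: "t \<noteq> half p" using assms(7) two_half by auto
  have lo: "t * p^(k-1) \<le> l" using assms(8) by (simp flip: of_nat_mult of_nat_power)
  have hi: "l \<le> t * repunit p k" using assms(9) unfolding S_def[symmetric] S by (simp flip: of_nat_mult)
  note weights = weights_case_c[OF assms(1,2,5,6) t lo hi]
  have M: "M = h * (C - 2 * int p * S + 2 * int (half_weight p k l) + 2 * int t * S)"
    using fibM_Vk2_int[OF assms(1-4)] weights(2) S unfolding M_def S_def C_def h_def by simp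
  show "M = h * (C + 2 * int t * S)" if "2 * int t \<le> int p - 3"
  proof -
    have "int (half_weight p k l) = int p * S" using weights(1) that two_half S by simp
    then show ?thesis unfolding M by (simp add: algebra_simps)
  qed
  show "M = h * (C + (2 * int t - 2 * int p) * S)" if "int p + 1 \<le> 2 * int t"
  proof -
    have "int (half_weight p k l) = 0" using weights(1) that two_half by simp
    then show ?thesis unfolding M by (simp add: algebra_simps)
  qed
qed

lemma fibM_Vk2_rank_half:
  assumes "odd p" "3 \<le> p" "1 \<le> k" "l < p^k" "rank_weight p k l = half p * repunit p k"
  shows "int (fibM p k (Vv (k + 2) l)) = (int p - 1) div 2 * (2 * (int k + 1) * int p ^ (k + 1) - 1
    - int p ^ k - 2 * (\<Sum>\<theta>\<in>{1..k-1}. int p ^ \<theta>) + 2 * int (half_weight p k l) - 1)"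
proof -
  define S where "S = int (repunit p k)"
  define T where "T = int (repunit p (k - 1))"
  have p: "0 < p" using assms(2) by simp
  have ST: "S = int p * T + 1"
    unfolding S_def T_def using repunit_Suc_left[of p "k - 1"] assms(3) by simp
  have pk: "int p ^ k = (int p - 1) * S + 1"
    unfolding S_def using arg_cong[OF repunit_geometric[OF p, of k], of int] p by (simp add: of_nat_diff)
  have h: "2 * ((int p - 1) div 2) = int p - 1" using assms(1) by (auto elim!: oddE)
  have T: "(\<Sum>\<theta>\<in>{1..k-1}. int p ^ \<theta>) = int p * T"
    unfolding T_def sum_power_int_interval using assms(3) by simp
  have S': "(\<Sum>j\<in>{0..k-1}. int p ^ j) = S" unfolding S_def using assms(3) by (rule sum_power_int_lower)
  have Y: "int (rank_weight p k l) = (int p - 1) div 2 * S" using assms(5) int_half[OF p] unfolding S_def by simp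
  have "F = H * (C - Pk - 2 * (P * T) + 2 * X - 1)"
    if "F = H * (C - 2 * P * S + 2 * X + 2 * (H * S))" "S = P * T + 1" "Pk = (P - 1) * S + 1" "2 * H = P - 1"
    for F H C P S T X Pk :: int
    using that by algebra
  from this[OF fibM_Vk2_int[OF assms(1-4), unfolded S' Y] ST pk h] show ?thesis unfolding T .
qed

lemma fibM_case_d:
  assumes "odd p" "3 \<le> p" "1 \<le> k" "l < p^k" "1 \<le> i" "i \<le> k - 1"
    "(int p - 1) div 2 * (\<Sum>\<iota>\<in>{i..k-1}. int p ^ \<iota>) \<le> int l"
    "int l \<le> (int p - 1) div 2 * (\<Sum>\<iota>\<in>{i-1..k-1}. int p ^ \<iota>) - 1"
  defines "M \<equiv> int (fibM p k (Vv (k + 2) l))"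
    and "C \<equiv> 2 * (int k + 1) * int p ^ (k + 1) - 1"
    and "h \<equiv> (int p - 1) div 2"
  shows "M = h * (C - int p ^ k - 2 * (\<Sum>\<theta>\<in>{1..k-1}. int p ^ \<theta>)
    + 2 * (\<Sum>\<mu>\<in>{k-i+1..k}. int p ^ \<mu>) - 1)"
proof -
  have i: "i < k" using assms(3,5,6) by simp
  have half: "(int p - 1) div 2 = int (half p)" using assms(2) by (simp add: int_half)
  have lo: "half p * (p^i * repunit p (k-i)) \<le> l"
    using assms(7) i unfolding half sum_power_int_interval by (simp flip: of_nat_mult)
  have "Suc (k - 1) - (i - 1) = k - i + 1" using assms(5) i by simp
  then have hi: "l < half p * (p^(i-1) * repunit p (k-i+1))"
    using assms(8) unfolding half sum_power_int_interval by (simp flip: of_nat_mult)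
  note weights = weights_case_d[OF assms(1,2,5) i lo hi]
  have "Suc k - (k - i + 1) = i" "k - i + 1 = k + 1 - i" using i by simp_all
  then have "(\<Sum>\<mu>\<in>{k-i+1..k}. int p ^ \<mu>) = int (half_weight p k l)"
    unfolding weights(1) sum_power_int_interval by simp
  then show ?thesis
    using fibM_Vk2_rank_half[OF assms(1-4) weights(2)] unfolding M_def C_def h_def by simp
qed

lemma fibM_case_e:
  assumes "odd p" "3 \<le> p" "1 \<le> k" "l < p^k" "int l = (int p - 1) div 2 * (\<Sum>j\<in>{0..k-1}. int p ^ j)"
  defines "M \<equiv> int (fibM p k (Vv (k + 2) l))"
    and "C \<equiv> 2 * (int k + 1) * int p ^ (k + 1) - 1"
    and "h \<equiv> (int p - 1) div 2"
  shows "M = h * (C - int p ^ k - 2 * (\<Sum>\<theta>\<in>{1..k-1}. int p ^ \<theta>) - 1)"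
proof -
  have "(int p - 1) div 2 = int (half p)" using assms(2) by (simp add: int_half)
  then have "int l = int (half p * repunit p k)"
    using assms(5) unfolding sum_power_int_lower[OF assms(3)] by simp
  then have "l = half p * repunit p k" by (rule of_nat_eq_iff[THEN iffD1])
  then show ?thesis
    using weights_case_e[OF assms(1,2), of k] fibM_Vk2_rank_half[OF assms(1-4)] unfolding M_def C_def h_def by simp
qed

theorem mainTheorem7:
  fixes p k l :: nat
  assumes "prime p" and "odd p" and "2 \<le> k" and "l < p^k"
  defines "M \<equiv> int (fibM p k (Vv (k + 2) l))"
    and "S \<equiv> (\<Sum>j\<in>{0..k-1}. int p ^ j)"
    and "C \<equiv> 2 * (int k + 1) * int p ^ (k + 1) - 1"
    and "h \<equiv> (int p - 1) div 2"
  shows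
   "(l = 0 \<longrightarrow> M = h * C)
  \<and> (\<forall>i t. i \<le> k - 2 \<and> 1 \<le> t \<and> t \<le> p - 1
        \<and> (int t - 1) * (\<Sum>\<iota>\<in>{i..k-1}. int p ^ \<iota>) + int p ^ i \<le> int l
        \<and> int l \<le> (int t - 1) * (\<Sum>\<iota>\<in>{i+1..k-1}. int p ^ \<iota>) + int p ^ (i + 1) - 1
      \<longrightarrow> (2 * int t \<le> int p - 1 \<longrightarrow>
             M = h * (C + 2 * int t * S - 2 * (\<Sum>\<mu>\<in>{0..k-i-2}. int p ^ \<mu>)))
        \<and> (int p + 1 \<le> 2 * int t \<and> t \<le> p - 1 \<longrightarrow>
             M = h * (C + (2 * int t - 2 * int p) * S - 2 * (\<Sum>\<mu>\<in>{0..k-i-2}. int p ^ \<mu>))))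
  \<and> (\<forall>t. 1 \<le> t \<and> t \<le> p - 1 \<and> 2 * int t \<noteq> int p - 1
        \<and> int t * int p ^ (k - 1) \<le> int l \<and> int l \<le> int t * S
      \<longrightarrow> (2 * int t \<le> int p - 3 \<longrightarrow> M = h * (C + 2 * int t * S))
        \<and> (int p + 1 \<le> 2 * int t \<and> t \<le> p - 1 \<longrightarrow> M = h * (C + (2 * int t - 2 * int p) * S)))
  \<and> (\<forall>i'. 1 \<le> i' \<and> i' \<le> k - 1
        \<and> h * (\<Sum>\<iota>\<in>{i'..k-1}. int p ^ \<iota>) \<le> int l
        \<and> int l \<le> h * (\<Sum>\<iota>\<in>{i'-1..k-1}. int p ^ \<iota>) - 1
      \<longrightarrow> M = h * (C - int p ^ k - 2 * (\<Sum>\<theta>\<in>{1..k-1}. int p ^ \<theta>)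
                   + 2 * (\<Sum>\<mu>\<in>{k-i'+1..k}. int p ^ \<mu>) - 1))
  \<and> (int l = h * S \<longrightarrow> M = h * (C - int p ^ k - 2 * (\<Sum>\<theta>\<in>{1..k-1}. int p ^ \<theta>) - 1))"
proof -
  have "2 \<le> p" "p \<noteq> 2" using prime_ge_2_nat[OF assms(1)] assms(2) by auto
  then have p: "odd p" "3 \<le> p" using assms(2) by simp_all
  have k: "1 \<le> k" using assms(3) by simp
  show ?thesis
    unfolding M_def S_def C_def h_def
    by (intro conjI allI impI; (elim conjE)?;
        rule fibM_case_a[OF p k] fibM_case_b[OF p assms(3,4)] fibM_case_c[OF p k assms(4)]
          fibM_case_d[OF p k assms(4)] fibM_case_e[OF p k assms(4)];
        assumption)
qed

end
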